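(* Let $\mathbf A$ be a finite nilpotent algebra with a Malcev term. Then $\mathrm{nuP}_{\mathbf A}\subseteq\mathsf{CC}^0$.
   Context: A finite algebra has finite universe and finitely many basic operations. An $n$-ary circuit over $\mathbf A$ is a DAG with one output node, sources labelled by variables or constants from $A$, gates labelled by basic operations; size is nodes plus edges. A NuDFA over $\mathbf A$ is $(\{t_n\}_{n\ge1},\iota,S)$ with $t_n$ an $n$-ary circuit, $\iota:\{0,1\}\to A$, $S\subseteq A$, accepting $b\in\{0,1\}^n$ iff $t_n(\iota(b_1),\dots,\iota(b_n))\in S$; polynomial size means size of $t_n$ polynomial in $n$; $\mathrm{nuP}_{\mathbf A}$ is the class of languages over $\{0,1\}$ accepted by polynomial-size NuDFAs over $\mathbf A$. A Malcev term is a ternary term $d$ with $d(x,y,y)=d(y,y,x)=x$; nilpotency is in the sense of commutator theory. $\mathsf{CC}^0$ is the class of languages recognized by families of polynomial-size constant-depth circuits built from $\mathrm{MOD}_m$ gates of unbounded fan-in for some fixed $m$, where a $\mathrm{MOD}_m$ gate with accepting set $T\subseteq\mathbb Z_m$ outputs 1 iff the sum of its Boolean inputs modulo $m$ lies in $T$. *)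

theory Defs
  imports Main
begin

text \<open>A finite algebra is given by a finite universe type 'a (the universe is UNIV),
  a finite type 'f of operation symbols, an arity function ar and an
  interpretation F (F f is only ever applied to lists of length ar f).\<close>

inductive_set clo :: "('f \<Rightarrow> nat) \<Rightarrow> ('f \<Rightarrow> 'a list \<Rightarrow> 'a) \<Rightarrow> ((nat \<Rightarrow> 'a) \<Rightarrow> 'a) set"
  for ar :: "'f \<Rightarrow> nat" and F :: "'f \<Rightarrow> 'a list \<Rightarrow> 'a" where
  proj: "(\<lambda>v. v i) \<in> clo ar F"
| app: "(\<forall>i<ar f. g i \<in> clo ar F) \<Longrightarrow> (\<lambda>v. F f (map (\<lambda>i. g i v) [0..<ar f])) \<in> clo ar F"

definition tup3 :: "'a \<Rightarrow> 'a \<Rightarrow> 'a \<Rightarrow> nat \<Rightarrow> 'a" where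
  "tup3 x y z = (\<lambda>i. if i = 0 then x else if i = 1 then y else z)"

definition has_malcev :: "('f \<Rightarrow> nat) \<Rightarrow> ('f \<Rightarrow> 'a list \<Rightarrow> 'a) \<Rightarrow> bool" where
  "has_malcev ar F \<longleftrightarrow> (\<exists>d \<in> clo ar F. \<forall>x y. d (tup3 x y y) = x \<and> d (tup3 y y x) = x)"

definition is_cong :: "('f \<Rightarrow> nat) \<Rightarrow> ('f \<Rightarrow> 'a list \<Rightarrow> 'a) \<Rightarrow> ('a \<times> 'a) set \<Rightarrow> bool" where
  "is_cong ar F \<theta> \<longleftrightarrow> equiv UNIV \<theta> \<and>
     (\<forall>f xs ys. length xs = ar f \<longrightarrow> length ys = ar f \<longrightarrow>
        (\<forall>i<ar f. (xs ! i, ys ! i) \<in> \<theta>) \<longrightarrow> (F f xs, F f ys) \<in> \<theta>)"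

definition mrg :: "(nat \<Rightarrow> 'a) \<Rightarrow> (nat \<Rightarrow> 'a) \<Rightarrow> nat \<Rightarrow> 'a" where
  "mrg a c = (\<lambda>i. if even i then a (i div 2) else c (i div 2))"

text \<open>C(alpha,beta;delta): alpha centralizes beta modulo delta (term condition).
  Even-indexed variables form the first block, odd-indexed ones the second block.\<close>
definition centralizes :: "('f \<Rightarrow> nat) \<Rightarrow> ('f \<Rightarrow> 'a list \<Rightarrow> 'a) \<Rightarrow>
    ('a \<times> 'a) set \<Rightarrow> ('a \<times> 'a) set \<Rightarrow> ('a \<times> 'a) set \<Rightarrow> bool" where
  "centralizes ar F \<alpha> \<beta> \<delta> \<longleftrightarrow>
     (\<forall>t \<in> clo ar F. \<forall>a b c d. (\<forall>i. (a i, b i) \<in> \<alpha>) \<longrightarrow> (\<forall>i. (c i, d i) \<in> \<beta>) \<longrightarrow>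
        (t (mrg a c), t (mrg a d)) \<in> \<delta> \<longrightarrow> (t (mrg b c), t (mrg b d)) \<in> \<delta>)"

definition commutator :: "('f \<Rightarrow> nat) \<Rightarrow> ('f \<Rightarrow> 'a list \<Rightarrow> 'a) \<Rightarrow>
    ('a \<times> 'a) set \<Rightarrow> ('a \<times> 'a) set \<Rightarrow> ('a \<times> 'a) set" where
  "commutator ar F \<alpha> \<beta> = \<Inter> {\<delta>. is_cong ar F \<delta> \<and> centralizes ar F \<alpha> \<beta> \<delta>}"

primrec lcs :: "('f \<Rightarrow> nat) \<Rightarrow> ('f \<Rightarrow> 'a list \<Rightarrow> 'a) \<Rightarrow> nat \<Rightarrow> ('a \<times> 'a) set" where
  "lcs ar F 0 = UNIV"
| "lcs ar F (Suc k) = commutator ar F UNIV (lcs ar F k)"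

definition nilpotent :: "('f \<Rightarrow> nat) \<Rightarrow> ('f \<Rightarrow> 'a list \<Rightarrow> 'a) \<Rightarrow> bool" where
  "nilpotent ar F \<longleftrightarrow> (\<exists>k. lcs ar F k = Id)"

datatype ('f, 'a) cnode = In nat | Cst 'a | Gt 'f "nat list"

definition wf_circ :: "('f \<Rightarrow> nat) \<Rightarrow> nat \<Rightarrow> ('f, 'a) cnode list \<Rightarrow> bool" where
  "wf_circ ar n C \<longleftrightarrow> C \<noteq> [] \<and> (\<forall>j<length C. case C ! j of
       In i \<Rightarrow> i < n
     | Cst a \<Rightarrow> True
     | Gt f args \<Rightarrow> length args = ar f \<and> (\<forall>k\<in>set args. k < j))"

definition circ_step :: "('f \<Rightarrow> 'a list \<Rightarrow> 'a) \<Rightarrow> (nat \<Rightarrow> 'a) \<Rightarrow> 'a list \<Rightarrow> ('f, 'a) cnode \<Rightarrow> 'a list" where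
  "circ_step F x vals nd = vals @ [case nd of In i \<Rightarrow> x i | Cst a \<Rightarrow> a
        | Gt f args \<Rightarrow> F f (map (\<lambda>k. vals ! k) args)]"

definition circ_eval :: "('f \<Rightarrow> 'a list \<Rightarrow> 'a) \<Rightarrow> (nat \<Rightarrow> 'a) \<Rightarrow> ('f, 'a) cnode list \<Rightarrow> 'a" where
  "circ_eval F x C = last (foldl (circ_step F x) [] C)"

fun cfanin :: "('f, 'a) cnode \<Rightarrow> nat" where
  "cfanin (Gt f args) = length args"
| "cfanin _ = 0"

definition circ_size :: "('f, 'a) cnode list \<Rightarrow> nat" where
  "circ_size C = length C + sum_list (map cfanin C)"

definition nuP :: "('f \<Rightarrow> nat) \<Rightarrow> ('f \<Rightarrow> 'a list \<Rightarrow> 'a) \<Rightarrow> bool list set set" where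
  "nuP ar F = {L. \<exists>(t :: nat \<Rightarrow> ('f, 'a) cnode list) (\<iota> :: bool \<Rightarrow> 'a) (S :: 'a set).
      (\<forall>n\<ge>1. wf_circ ar n (t n)) \<and>
      (\<exists>c k :: nat. \<forall>n\<ge>1. circ_size (t n) \<le> c * n ^ k) \<and>
      L = {b. length b \<ge> 1 \<and> circ_eval F (\<lambda>i. \<iota> (b ! i)) (t (length b)) \<in> S}}"

text \<open>Nodes: an input variable, or a MOD_m gate with accepting set T and list of input wires.\<close>
datatype mnode = MIn nat | MGate "nat set" "nat list"

definition wf_mcirc :: "nat \<Rightarrow> mnode list \<Rightarrow> bool" where
  "wf_mcirc n C \<longleftrightarrow> C \<noteq> [] \<and> (\<forall>j<length C. case C ! j of
       MIn i \<Rightarrow> i < n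
     | MGate T args \<Rightarrow> (\<forall>k\<in>set args. k < j))"

definition mstep :: "nat \<Rightarrow> bool list \<Rightarrow> bool list \<Rightarrow> mnode \<Rightarrow> bool list" where
  "mstep m x vals nd = vals @ [case nd of MIn i \<Rightarrow> x ! i
        | MGate T args \<Rightarrow> (sum_list (map (\<lambda>k. if vals ! k then 1 else 0) args) mod m) \<in> T]"

definition meval :: "nat \<Rightarrow> bool list \<Rightarrow> mnode list \<Rightarrow> bool" where
  "meval m x C = last (foldl (mstep m x) [] C)"

definition dstep :: "nat list \<Rightarrow> mnode \<Rightarrow> nat list" where
  "dstep ds nd = ds @ [case nd of MIn i \<Rightarrow> 0
        | MGate T args \<Rightarrow> Suc (fold max (map (\<lambda>k. ds ! k) args) 0)]"

definition mdepth :: "mnode list \<Rightarrow> nat" where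
  "mdepth C = last (foldl dstep [] C)"

fun mfanin :: "mnode \<Rightarrow> nat" where
  "mfanin (MGate T args) = length args"
| "mfanin (MIn i) = 0"

definition msize :: "mnode list \<Rightarrow> nat" where
  "msize C = length C + sum_list (map mfanin C)"

definition CC0 :: "bool list set set" where
  "CC0 = {L. \<exists>(m :: nat) (d :: nat) (c :: nat) (k :: nat) (C :: nat \<Rightarrow> mnode list).
      m \<ge> 2 \<and>
      (\<forall>n. wf_mcirc n (C n) \<and> mdepth (C n) \<le> d \<and> msize (C n) \<le> c * n ^ k + c) \<and>
      (\<forall>b. b \<in> L \<longleftrightarrow> meval m b (C (length b)))}"

end

theory Submission
  imports Defs "HOL-Algebra.FiniteProduct"
begin

(* Let UNIV = gamma_0, gamma_1, ..., gamma_K = Id be the lower central series, so that each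
   quotient gamma_j / gamma_(j+1) is central.  With a Malcev term d, the gamma_(j+1)-classes inside
   one gamma_j-class form a finite abelian group (x + y = d(x, e, y)) on which every basic operation
   acts affinely in each argument.  Unfolding a circuit node by node, the position of the value at
   node v inside its gamma_j-class is therefore a sum, over all nodes w, of group elements that
   only depend on the gamma_j-classes of the arguments of w.  So the gamma_(j+1)-class at v is
   determined by counting, modulo the group order, how many w contribute each element.
   A constant-depth circuit can thus compute the gamma_j-classes of all node values level by
   level: MOD gates do the counting, and lookups of bounded fan-in are MOD_m gates fed with
   binary-weighted copies of their inputs.  The depth is 3K + 2 and the size is polynomial. *)

section \<open>Clones, congruences and the lower central series\<close>

lemma clo_comp:
  assumes "g \<in> clo ar F" and "\<And>i. \<sigma> i \<in> clo ar F"
  shows "(\<lambda>v. g (\<lambda>i. \<sigma> i v)) \<in> clo ar F"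
  using assms(1)
proof (induction rule: clo.induct)
  case (proj i)
  then show ?case using assms(2) by simp
next
  case (app f g)
  then show ?case
    using clo.app[where f=f and g="\<lambda>i v. g i (\<lambda>i. \<sigma> i v)" and ar=ar and F=F] by simp
qed

lemma clo_rename: "t \<in> clo ar F \<Longrightarrow> (\<lambda>v. t (\<lambda>k. v (s k))) \<in> clo ar F"
  using clo_comp[of t ar F "\<lambda>i v. v (s i)"] by (auto intro: clo.proj)

lemma clo_comp_tup3[intro]:
  assumes "d \<in> clo ar F" "a \<in> clo ar F" "b \<in> clo ar F" "c \<in> clo ar F"
  shows "(\<lambda>v. d (tup3 (a v) (b v) (c v))) \<in> clo ar F"
proof -
  have "\<And>i. tup3 a b c i \<in> clo ar F" using assms by (simp add: tup3_def)
  moreover have "tup3 a b c i v = tup3 (a v) (b v) (c v) i" for i v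
    by (simp add: tup3_def)
  ultimately show ?thesis using clo_comp[OF assms(1), of "tup3 a b c"] by simp
qed

lemma clo_preserves_cong:
  assumes "t \<in> clo ar F" "is_cong ar F \<theta>" "\<And>i. (x i, y i) \<in> \<theta>"
  shows "(t x, t y) \<in> \<theta>"
  using assms(1)
proof (induction rule: clo.induct)
  case (proj i)
  then show ?case using assms(3) by simp
next
  case (app f g)
  then show ?case using assms(2) unfolding is_cong_def by auto
qed

lemma is_cong_refl: "is_cong ar F \<theta> \<Longrightarrow> (x, x) \<in> \<theta>"
  unfolding is_cong_def equiv_def refl_on_def by auto

lemma is_cong_sym: "is_cong ar F \<theta> \<Longrightarrow> (x, y) \<in> \<theta> \<Longrightarrow> (y, x) \<in> \<theta>"
  unfolding is_cong_def equiv_def sym_def by auto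

lemma is_cong_trans: "is_cong ar F \<theta> \<Longrightarrow> (x, y) \<in> \<theta> \<Longrightarrow> (y, z) \<in> \<theta> \<Longrightarrow> (x, z) \<in> \<theta>"
  unfolding is_cong_def equiv_def trans_def by blast

lemma is_cong_op:
  assumes "is_cong ar F \<theta>" "length xs = ar f" "length ys = ar f"
    "\<And>i. i < ar f \<Longrightarrow> (xs ! i, ys ! i) \<in> \<theta>"
  shows "(F f xs, F f ys) \<in> \<theta>"
  using assms unfolding is_cong_def by blast

lemma is_cong_UNIV: "is_cong ar F UNIV"
  unfolding is_cong_def by (auto simp: equiv_def refl_on_def sym_def trans_def)

lemma is_cong_Inter:
  assumes "S \<noteq> {}" "\<And>\<delta>. \<delta> \<in> S \<Longrightarrow> is_cong ar F \<delta>"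
  shows "is_cong ar F (\<Inter>S)"
proof -
  have e: "\<And>\<delta>. \<delta> \<in> S \<Longrightarrow> equiv UNIV \<delta>" using assms(2) unfolding is_cong_def by blast
  have c: "\<And>\<delta> f xs ys. \<delta> \<in> S \<Longrightarrow> length xs = ar f \<Longrightarrow> length ys = ar f \<Longrightarrow>
        (\<forall>i<ar f. (xs ! i, ys ! i) \<in> \<delta>) \<Longrightarrow> (F f xs, F f ys) \<in> \<delta>"
    using assms(2) unfolding is_cong_def by blast
  have "equiv UNIV (\<Inter>S)"
  proof (rule equivI)
    show "refl_on UNIV (\<Inter>S)" using e by (auto simp: refl_on_def equiv_def)
    show "sym (\<Inter>S)" unfolding sym_def
    proof (intro allI impI InterI)
      fix x y \<delta> assume "(x, y) \<in> \<Inter>S" "\<delta> \<in> S"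
      then show "(y, x) \<in> \<delta>" using e[of \<delta>] unfolding equiv_def sym_def by blast
    qed
    show "trans (\<Inter>S)" unfolding trans_def
    proof (intro allI impI InterI)
      fix x y z \<delta> assume "(x, y) \<in> \<Inter>S" "(y, z) \<in> \<Inter>S" "\<delta> \<in> S"
      then show "(x, z) \<in> \<delta>" using e[of \<delta>] unfolding equiv_def trans_def by blast
    qed
  qed auto
  moreover have "\<forall>f xs ys. length xs = ar f \<longrightarrow> length ys = ar f \<longrightarrow>
        (\<forall>i<ar f. (xs ! i, ys ! i) \<in> \<Inter>S) \<longrightarrow> (F f xs, F f ys) \<in> \<Inter>S"
  proof (intro allI impI InterI)
    fix f xs ys \<delta> assume "length xs = ar f" "length ys = ar f" "\<forall>i<ar f. (xs ! i, ys ! i) \<in> \<Inter>S" "\<delta> \<in> S"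
    then show "(F f xs, F f ys) \<in> \<delta>" using c[of \<delta> xs f ys] by blast
  qed
  ultimately show ?thesis unfolding is_cong_def by blast
qed

lemma commutator_is_cong: "is_cong ar F (commutator ar F \<alpha> \<beta>)"
  unfolding commutator_def
proof (rule is_cong_Inter)
  have "centralizes ar F \<alpha> \<beta> UNIV" unfolding centralizes_def by blast
  then show "{\<delta>. is_cong ar F \<delta> \<and> centralizes ar F \<alpha> \<beta> \<delta>} \<noteq> {}"
    using is_cong_UNIV by blast
qed blast

lemma centralizes_commutator: "centralizes ar F \<alpha> \<beta> (commutator ar F \<alpha> \<beta>)"
  unfolding commutator_def centralizes_def by blast

lemma lcs_is_cong: "is_cong ar F (lcs ar F j)"
  by (cases j) (simp_all add: is_cong_UNIV commutator_is_cong)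

lemma nth_list_update_if: "j < length xs \<Longrightarrow> xs[i := x] ! j = (if i = j then x else xs ! j)"
  by (cases "i = j") auto

lemma replicate_update_same[simp]: "(replicate n a)[i := a] = replicate n a"
proof (cases "i < n")
  case True
  then show ?thesis using list_update_id[of "replicate n a" i] by simp
qed (simp add: list_update_beyond)

lemma clo_op_update:
  assumes "T \<in> clo ar F"
  shows "(\<lambda>v. F f ((map (\<lambda>k. v (2*k)) [0..<ar f])[i := T v])) \<in> clo ar F"
proof -
  have "(\<lambda>v. F f (map (\<lambda>k. (if k = i then T else (\<lambda>v. v (2*k))) v) [0..<ar f])) \<in> clo ar F"
    by (rule clo.app) (use assms in \<open>auto intro: clo.proj\<close>)
  moreover have "(map (\<lambda>k. v (2*k)) [0..<ar f])[i := T v] =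
      map (\<lambda>k. (if k = i then T else (\<lambda>v. v (2*k))) v) [0..<ar f]" for v
    by (rule nth_equalityI) (auto simp: nth_list_update_if)
  ultimately show ?thesis by simp
qed

text \<open>With a Malcev term d, the term condition C(1, \<beta>; \<delta>) says that replacing the second
  block c' by c inside t changes the value by the same amount modulo \<delta>, whatever the first
  block is.  Proof: apply the term condition to d(t(u1, w), t(u2, w), t(u2, c)), with first block
  (u1, u2, c) and second block w.\<close>

lemma centralizes_malcev_shift:
  fixes u u' c c' :: "nat \<Rightarrow> 'a"
  assumes cent: "centralizes ar F UNIV \<beta> \<delta>" and d: "d \<in> clo ar F"
    and mal: "\<And>x y. d (tup3 x y y) = x" "\<And>x y. d (tup3 y y x) = x"
    and \<delta>: "is_cong ar F \<delta>"
    and t: "t \<in> clo ar F" and cc': "\<And>i. (c i, c' i) \<in> \<beta>"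
  shows "(t (mrg u c), d (tup3 (t (mrg u c')) (t (mrg u' c')) (t (mrg u' c)))) \<in> \<delta>"
proof -
  define mrg3 where
    "mrg3 u1 u2 c k = (if k mod 3 = 0 then u1 (k div 3) else if k mod 3 = 1 then u2 (k div 3)
       else c (k div 3))" for u1 u2 c :: "nat \<Rightarrow> 'a" and k :: nat
  define s1 where "s1 k = (if even k then 6 * (k div 2) else k)" for k :: nat
  define s2 where "s2 k = (if even k then 6 * (k div 2) + 2 else k)" for k :: nat
  define s3 where "s3 k = (if even k then 6 * (k div 2) + 2 else 6 * (k div 2) + 4)" for k :: nat
  have div3[simp]: "Suc (3*q) div 3 = q" "Suc (3*q) mod 3 = 1" "Suc (Suc (3*q)) div 3 = q"
    "Suc (Suc (3*q)) mod 3 = 2" "(3*q) div 3 = q" "(3*q) mod 3 = 0" for q :: nat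
    by presburger+
  have s: "(\<lambda>k. mrg (mrg3 u1 u2 c) w (s1 k)) = mrg u1 w"
    "(\<lambda>k. mrg (mrg3 u1 u2 c) w (s2 k)) = mrg u2 w"
    "(\<lambda>k. mrg (mrg3 u1 u2 c) w (s3 k)) = mrg u2 c" for u1 u2 c w
    by (auto simp: mrg_def mrg3_def s1_def) (auto simp: mrg_def mrg3_def s2_def s3_def elim!: evenE oddE)
  define R where "R v = d (tup3 (t (\<lambda>k. v (s1 k))) (t (\<lambda>k. v (s2 k))) (t (\<lambda>k. v (s3 k))))" for v
  have R: "R \<in> clo ar F" unfolding R_def
    by (rule clo_comp_tup3[OF d]; rule clo_rename[OF t])
  have Rv: "R (mrg (mrg3 u1 u2 c) w) = d (tup3 (t (mrg u1 w)) (t (mrg u2 w)) (t (mrg u2 c)))"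
    for u1 u2 w
    unfolding R_def s ..
  have "(R (mrg (mrg3 u' u' c) c), R (mrg (mrg3 u' u' c) c')) \<in> \<delta>"
    unfolding Rv mal by (rule is_cong_refl[OF \<delta>])
  moreover have "\<forall>a b c' e'. (\<forall>i. (a i, b i) \<in> UNIV) \<longrightarrow> (\<forall>i. (c' i, e' i) \<in> \<beta>) \<longrightarrow>
      (R (mrg a c'), R (mrg a e')) \<in> \<delta> \<longrightarrow> (R (mrg b c'), R (mrg b e')) \<in> \<delta>"
    using cent R unfolding centralizes_def by (rule bspec)
  ultimately have "(R (mrg (mrg3 u u' c) c), R (mrg (mrg3 u u' c) c')) \<in> \<delta>"
    using cc' by blast
  then show ?thesis unfolding Rv mal .
qed

section \<open>Valuations of circuits\<close>

definition gates_wf :: "('f \<Rightarrow> nat) \<Rightarrow> ('f, 'a) cnode list \<Rightarrow> bool" where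
  "gates_wf ar C \<longleftrightarrow> (\<forall>j<length C. case C ! j of
       Gt f args \<Rightarrow> length args = ar f \<and> (\<forall>k\<in>set args. k < j)
     | _ \<Rightarrow> True)"

definition is_valuation :: "('f \<Rightarrow> 'a list \<Rightarrow> 'a) \<Rightarrow> ('f, 'a) cnode list \<Rightarrow> 'a list \<Rightarrow> bool" where
  "is_valuation F C vs \<longleftrightarrow> length vs = length C \<and>
     (\<forall>j<length C. case C ! j of Gt f args \<Rightarrow> vs ! j = F f (map (\<lambda>k. vs ! k) args) | _ \<Rightarrow> True)"

definition local_view :: "('a \<Rightarrow> 'a) \<Rightarrow> ('f, 'a) cnode list \<Rightarrow> 'a list \<Rightarrow> nat \<Rightarrow> 'a list" where
  "local_view \<rho> C vs w =
     (case C ! w of Gt f args \<Rightarrow> map (\<lambda>k. \<rho> (vs ! k)) args | _ \<Rightarrow> [vs ! w])"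

definition node_values :: "('f \<Rightarrow> 'a list \<Rightarrow> 'a) \<Rightarrow> (nat \<Rightarrow> 'a) \<Rightarrow> ('f, 'a) cnode list \<Rightarrow> 'a list" where
  "node_values F x C = foldl (circ_step F x) [] C"

lemma foldl_snoc_step:
  assumes "\<And>vs nd. f vs nd = vs @ [\<phi> vs nd]"
  shows "length (foldl f [] C) = length C \<and>
    (\<forall>j<length C. foldl f [] C ! j = \<phi> (take j (foldl f [] C)) (C ! j))"
proof (induction C rule: rev_induct)
  case Nil
  then show ?case by simp
next
  case (snoc x C)
  then show ?case by (auto simp: assms nth_append less_Suc_eq)
qed

lemma wf_circ_gates_wf: "wf_circ ar n C \<Longrightarrow> gates_wf ar C"
  unfolding wf_circ_def gates_wf_def
proof (intro allI impI)
  fix j assume "C \<noteq> [] \<and> (\<forall>j<length C. case C ! j of In i \<Rightarrow> i < n | Cst a \<Rightarrow> True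
       | Gt f args \<Rightarrow> length args = ar f \<and> (\<forall>k\<in>set args. k < j))" "j < length C"
  then show "case C ! j of Gt f args \<Rightarrow> length args = ar f \<and> (\<forall>k\<in>set args. k < j) | _ \<Rightarrow> True"
    by (cases "C ! j") auto
qed

lemma
  shows length_node_values: "length (node_values F x C) = length C"
    and nth_node_values_take: "j < length C \<Longrightarrow> node_values F x C ! j =
      (case C ! j of In i \<Rightarrow> x i | Cst a \<Rightarrow> a
         | Gt f args \<Rightarrow> F f (map (\<lambda>k. take j (node_values F x C) ! k) args))"
  unfolding node_values_def
  using foldl_snoc_step[where \<phi>="\<lambda>vals nd. case nd of In i \<Rightarrow> x i | Cst a \<Rightarrow> a
        | Gt f args \<Rightarrow> F f (map (\<lambda>k. vals ! k) args)" and f="circ_step F x" and C=C]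
  by (simp_all add: circ_step_def)

lemma nth_node_values:
  assumes "gates_wf ar C" "j < length C"
  shows "node_values F x C ! j = (case C ! j of In i \<Rightarrow> x i | Cst a \<Rightarrow> a
    | Gt f args \<Rightarrow> F f (map (\<lambda>k. node_values F x C ! k) args))"
proof (cases "C ! j")
  case (Gt f args)
  then have "\<forall>k\<in>set args. k < j" using assms unfolding gates_wf_def by force
  then have m: "map (\<lambda>k. take j (node_values F x C) ! k) args = map (\<lambda>k. node_values F x C ! k) args"
    by (intro map_cong) auto
  show ?thesis using nth_node_values_take[OF assms(2), where F=F and x=x] Gt by (simp add: m)
qed (use nth_node_values_take[OF assms(2), where F=F and x=x] in simp_all)

lemma node_values_is_valuation: "gates_wf ar C \<Longrightarrow> is_valuation F C (node_values F x C)"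
  unfolding is_valuation_def by (auto simp: length_node_values nth_node_values split: cnode.split)

lemma circ_eval_node_values: "C \<noteq> [] \<Longrightarrow> circ_eval F x C = node_values F x C ! (length C - 1)"
  unfolding circ_eval_def node_values_def[symmetric]
  by (metis last_conv_nth length_0_conv length_node_values)

section \<open>Finite products in abelian groups\<close>

lemma (in comm_monoid) finprod_swap:
  assumes "finite I" "finite W" "\<And>i w. i \<in> I \<Longrightarrow> w \<in> W \<Longrightarrow> X i w \<in> carrier G"
  shows "(\<Otimes>i\<in>I. \<Otimes>w\<in>W. X i w) = (\<Otimes>w\<in>W. \<Otimes>i\<in>I. X i w)"
  using assms(1,3)
proof (induction I rule: finite_induct)
  case empty
  then show ?case by simp
next
  case (insert i I)
  then have "(\<Otimes>i\<in>insert i I. \<Otimes>w\<in>W. X i w) = (\<Otimes>w\<in>W. X i w) \<otimes> (\<Otimes>w\<in>W. \<Otimes>i\<in>I. X i w)"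
    by (simp add: Pi_def)
  also have "\<dots> = (\<Otimes>w\<in>W. X i w \<otimes> (\<Otimes>i\<in>I. X i w))"
    using insert.prems by (simp add: finprod_multf Pi_def)
  also have "\<dots> = (\<Otimes>w\<in>W. \<Otimes>i\<in>insert i I. X i w)"
    using insert by (intro finprod_cong') (auto simp: Pi_def)
  finally show ?case .
qed

lemma (in comm_monoid) finprod_endomorphism:
  assumes "\<And>x. x \<in> carrier G \<Longrightarrow> \<phi> x \<in> carrier G"
    and "\<And>x y. x \<in> carrier G \<Longrightarrow> y \<in> carrier G \<Longrightarrow> \<phi> (x \<otimes> y) = \<phi> x \<otimes> \<phi> y"
    and "\<phi> \<one> = \<one>" and "finite A" and "g \<in> A \<rightarrow> carrier G"
  shows "\<phi> (\<Otimes>a\<in>A. g a) = (\<Otimes>a\<in>A. \<phi> (g a))"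
  using assms(4,5)
proof (induction A rule: finite_induct)
  case empty
  then show ?case using assms(3) by simp
next
  case (insert a A)
  then show ?case using assms(1,2) by (simp add: Pi_def)
qed

lemma (in comm_group) nat_pow_mod_card:
  fixes n :: nat
  assumes "finite (carrier G)" "x \<in> carrier G"
  shows "x [^] n = x [^] (n mod card (carrier G))"
proof -
  define M where "M = card (carrier G)"
  have "x [^] n = x [^] (M * (n div M) + n mod M)" by simp
  also have "\<dots> = (x [^] M) [^] (n div M) \<otimes> x [^] (n mod M)"
    using assms by (simp add: nat_pow_mult nat_pow_pow)
  finally show ?thesis using assms by (simp add: power_order_eq_one M_def)
qed

lemma (in comm_group) finprod_by_counts:
  fixes N :: nat
  assumes "finite (carrier G)" "finite A" "f \<in> A \<rightarrow> carrier G" "\<And>w. w < N \<Longrightarrow> g w \<in> A"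
  shows "(\<Otimes>w\<in>{..<N}. f (g w)) = (\<Otimes>a\<in>A. f a [^] (card {w. w < N \<and> g w = a} mod card (carrier G)))"
proof -
  have U: "{..<N} = (\<Union>a\<in>A. {w. w < N \<and> g w = a})" using assms(4) by auto
  have fin: "finite {w. w < N \<and> g w = a}" for a
    by (rule finite_subset[of _ "{..<N}"]) auto
  have "(\<Otimes>w\<in>{..<N}. f (g w)) = (\<Otimes>a\<in>A. \<Otimes>w\<in>{w. w < N \<and> g w = a}. f (g w))"
    unfolding U using assms(2-4) fin
    by (intro finprod_UN_disjoint) (auto simp: pairwise_def disjnt_def Pi_def)
  also have "\<dots> = (\<Otimes>a\<in>A. f a [^] card {w. w < N \<and> g w = a})"
  proof (rule finprod_cong')
    fix a assume "a \<in> A"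
    then have fa: "f a \<in> carrier G" using assms(3) by blast
    then have "(\<Otimes>w\<in>{w. w < N \<and> g w = a}. f (g w)) = (\<Otimes>w\<in>{w. w < N \<and> g w = a}. f a)"
      by (intro finprod_cong') auto
    then show "(\<Otimes>w\<in>{w. w < N \<and> g w = a}. f (g w)) = f a [^] card {w. w < N \<and> g w = a}"
      using fa by (simp add: finprod_const)
  qed (use assms(3) in auto)
  also have "\<dots> = (\<Otimes>a\<in>A. f a [^] (card {w. w < N \<and> g w = a} mod card (carrier G)))"
    using assms(1,3) by (intro finprod_cong') (auto simp: Pi_iff intro!: nat_pow_mod_card)
  finally show ?thesis .
qed

section \<open>Central quotients with a Malcev term\<close>

text \<open>Here \<beta>/\<delta> is central and e is a base point. Modulo \<delta>, the \<beta>-class of e is an abelian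
  group under add, with inverse sub e, and every basic operation is affine in each argument.
  Each identity below is an instance of centralizes_malcev_shift.\<close>

locale central_pair =
  fixes ar :: "'f \<Rightarrow> nat" and F :: "'f \<Rightarrow> 'a::finite list \<Rightarrow> 'a" and d :: "(nat \<Rightarrow> 'a) \<Rightarrow> 'a"
    and \<beta> \<delta> :: "('a \<times> 'a) set" and e :: 'a
  assumes d_clo: "d \<in> clo ar F"
    and malcev_left[simp]: "\<And>x y. d (tup3 x y y) = x"
    and malcev_right[simp]: "\<And>x y. d (tup3 y y x) = x"
    and \<beta>_cong: "is_cong ar F \<beta>" and \<delta>_cong: "is_cong ar F \<delta>"
    and central: "centralizes ar F UNIV \<beta> \<delta>"
begin

abbreviation D :: "'a \<Rightarrow> 'a \<Rightarrow> 'a \<Rightarrow> 'a" where "D x y z \<equiv> d (tup3 x y z)"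
abbreviation add :: "'a \<Rightarrow> 'a \<Rightarrow> 'a" where "add x y \<equiv> D x e y"
abbreviation sub :: "'a \<Rightarrow> 'a \<Rightarrow> 'a" where "sub x y \<equiv> D x y e"

lemmas clo_D_intros = clo_comp_tup3 d_clo clo.proj

lemma D_cong:
  assumes "is_cong ar F \<theta>" "(x, x') \<in> \<theta>" "(y, y') \<in> \<theta>" "(z, z') \<in> \<theta>"
  shows "(D x y z, D x' y' z') \<in> \<theta>"
  using clo_preserves_cong[OF d_clo assms(1), of "tup3 x y z" "tup3 x' y' z'"] assms(2-4)
  by (simp add: tup3_def)

lemma \<beta>_refl: "(x, x) \<in> \<beta>" using is_cong_refl[OF \<beta>_cong] .
lemma \<delta>_refl: "(x, x) \<in> \<delta>" using is_cong_refl[OF \<delta>_cong] .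
lemma \<beta>_sym: "(x, y) \<in> \<beta> \<Longrightarrow> (y, x) \<in> \<beta>" using is_cong_sym[OF \<beta>_cong] .
lemma \<delta>_sym: "(x, y) \<in> \<delta> \<Longrightarrow> (y, x) \<in> \<delta>" using is_cong_sym[OF \<delta>_cong] .
lemma \<beta>_trans: "(x, y) \<in> \<beta> \<Longrightarrow> (y, z) \<in> \<beta> \<Longrightarrow> (x, z) \<in> \<beta>" using is_cong_trans[OF \<beta>_cong] .
lemma \<delta>_trans: "(x, y) \<in> \<delta> \<Longrightarrow> (y, z) \<in> \<delta> \<Longrightarrow> (x, z) \<in> \<delta>" using is_cong_trans[OF \<delta>_cong] .

text \<open>The term \<phi> has x, y, z as first block and p, q as second block.\<close>

lemma shift_term:
  assumes "(\<lambda>v. \<phi> (v 0) (v 2) (v 4) (v 1) (v 3)) \<in> clo ar F" "(p, p') \<in> \<beta>" "(q, q') \<in> \<beta>"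
  shows "(\<phi> x y z p q, D (\<phi> x y z p' q') (\<phi> x' y' z' p' q') (\<phi> x' y' z' p q)) \<in> \<delta>"
proof -
  have "\<And>i. (tup3 p q q i, tup3 p' q' q' i) \<in> \<beta>" using assms(2,3) by (simp add: tup3_def)
  from centralizes_malcev_shift[where c="tup3 p q q" and c'="tup3 p' q' q'" and u="tup3 x y z"
      and u'="tup3 x' y' z'", OF central d_clo malcev_left malcev_right \<delta>_cong assms(1) this]
  show ?thesis by (simp add: mrg_def tup3_def)
qed

lemma add_comm_mod:
  assumes "(y, e) \<in> \<beta>" shows "(add y x, add x y) \<in> \<delta>"
proof -
  have "(add y x, D (D e e x) (D e e e) (D y e e)) \<in> \<delta>"
    by (rule shift_term[where \<phi>="\<lambda>x1 x2 x3 w1 w2. D w1 x2 x1"])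
      (use assms \<beta>_refl in \<open>auto intro!: clo_D_intros\<close>)
  then show ?thesis by simp
qed

lemma add_assoc_mod:
  assumes "(y, e) \<in> \<beta>" "(z, e) \<in> \<beta>" shows "(add (add x y) z, add x (add y z)) \<in> \<delta>"
proof -
  have "(add (add x y) z, D (D (D x e e) e e) (D (D e e e) e e) (D (D e e y) e z)) \<in> \<delta>"
    by (rule shift_term[where \<phi>="\<lambda>x1 x2 x3 w1 w2. D (D x1 x2 w1) x2 w2"])
      (use assms \<beta>_refl in \<open>auto intro!: clo_D_intros\<close>)
  then show ?thesis by simp
qed

lemma add_neg_mod:
  assumes "(x, e) \<in> \<beta>" shows "(add x (sub e x), e) \<in> \<delta>"
proof -
  have "(D x x e, D (D x e e) (D e e e) (D e x e)) \<in> \<delta>"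
    by (rule shift_term[where \<phi>="\<lambda>x1 x2 x3 w1 w2. D x1 w1 x2"])
      (use assms \<beta>_refl in \<open>auto intro!: clo_D_intros\<close>)
  then show ?thesis by (simp add: \<delta>_sym)
qed

lemma sub_add_cancel_mod:
  assumes "(y, r) \<in> \<beta>" shows "(add (sub y r) r, y) \<in> \<delta>"
proof -
  have "(add (sub y r) r, D (D (D r r e) e r) (D (D r e e) e e) (D (D y e e) e e)) \<in> \<delta>"
    by (rule shift_term[where \<phi>="\<lambda>x1 x2 x3 w1 w2. D (D w1 x1 x2) x2 x1"])
      (use assms \<beta>_refl in \<open>auto intro!: clo_D_intros\<close>)
  then show ?thesis by simp
qed

lemma add_sub_cancel_left_mod:
  assumes "(u, e) \<in> \<beta>" "(u', e) \<in> \<beta>" shows "(sub (add u u') u, u') \<in> \<delta>"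
proof -
  have "(sub (add u u') u, D (D (D u e e) u e) (D (D e e e) e e) (D (D e e u') e e)) \<in> \<delta>"
    by (rule shift_term[where \<phi>="\<lambda>x1 x2 x3 w1 w2. D (D x1 x2 w1) x1 x2"])
      (use assms \<beta>_refl in \<open>auto intro!: clo_D_intros\<close>)
  then show ?thesis by simp
qed

lemma sub_chain_mod:
  assumes "(a, b) \<in> \<beta>" "(b, c) \<in> \<beta>"
  shows "(sub c a, add (sub b a) (sub c b)) \<in> \<delta>"
proof -
  have "(add (sub b a) (sub c b),
      D (D (D a a e) e (sub c a)) (D (D a e e) e (sub c a)) (D (D b e e) e (sub c b))) \<in> \<delta>"
    by (rule shift_term[where \<phi>="\<lambda>x1 x2 x3 w1 w2. D (D w1 x1 x2) x2 (D x3 w1 x2)"])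
      (use \<beta>_refl \<beta>_sym[OF assms(1)] in \<open>auto intro!: clo_D_intros\<close>)
  then have "(add (sub b a) (sub c b), D (sub c a) (add a (sub c a)) (add b (sub c b))) \<in> \<delta>"
    by simp
  moreover have add_sub: "(add w (sub c w), c) \<in> \<delta>" if "(c, w) \<in> \<beta>" for w
  proof -
    have "(sub c w, sub w w) \<in> \<beta>" using D_cong[OF \<beta>_cong that \<beta>_refl \<beta>_refl] .
    then have "(add (sub c w) w, add w (sub c w)) \<in> \<delta>" using add_comm_mod by simp
    then show ?thesis using sub_add_cancel_mod[OF that] \<delta>_sym \<delta>_trans by blast
  qed
  have "(c, a) \<in> \<beta>" "(c, b) \<in> \<beta>" using assms \<beta>_sym \<beta>_trans by blast+
  then have "(D (sub c a) (add a (sub c a)) (add b (sub c b)), D (sub c a) c c) \<in> \<delta>"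
    by (intro D_cong[OF \<delta>_cong \<delta>_refl] add_sub)
  ultimately have "(add (sub b a) (sub c b), D (sub c a) c c) \<in> \<delta>" by (rule \<delta>_trans)
  then have "(add (sub b a) (sub c b), sub c a) \<in> \<delta>" by simp
  then show ?thesis by (rule \<delta>_sym)
qed

end

context central_pair
begin

definition block :: "'a set" where "block = {x. (x, e) \<in> \<beta>}"

lemma e_block[simp]: "e \<in> block"
  unfolding block_def by (simp add: \<beta>_refl)

lemma add_block: "x \<in> block \<Longrightarrow> y \<in> block \<Longrightarrow> add x y \<in> block"
  unfolding block_def using D_cong[OF \<beta>_cong _ \<beta>_refl[of e], of x e y e] by simp

lemma sub_block: "(x, y) \<in> \<beta> \<Longrightarrow> sub y x \<in> block"
  unfolding block_def using D_cong[OF \<beta>_cong \<beta>_sym \<beta>_refl[of x] \<beta>_refl[of e], of x y] by simp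

definition linear_part :: "'f \<Rightarrow> nat \<Rightarrow> 'a \<Rightarrow> 'a" where
  "linear_part f i u = sub (F f ((replicate (ar f) e)[i := u])) (F f (replicate (ar f) e))"

lemma linear_part_cong: "(u, u') \<in> \<delta> \<Longrightarrow> (linear_part f i u, linear_part f i u') \<in> \<delta>"
  unfolding linear_part_def
  by (rule D_cong[OF \<delta>_cong _ \<delta>_refl \<delta>_refl], rule is_cong_op[OF \<delta>_cong])
    (auto simp: nth_list_update_if \<delta>_refl)

lemma linear_part_e[simp]: "linear_part f i e = e"
  by (simp add: linear_part_def)

lemma linear_part_block: "u \<in> block \<Longrightarrow> linear_part f i u \<in> block"
  unfolding linear_part_def
  by (rule sub_block, rule is_cong_op[OF \<beta>_cong])
    (auto simp: nth_list_update_if \<beta>_refl block_def \<beta>_sym)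

text \<open>Shift the second block from e to c = sub y x in
  t(zs, x; c) = sub (F f (zs[i := add c x])) (F f (zs[i := x])), which is e at c = e, and
  compare with the first block (e, ..., e), where t(e, ..., e; c) = linear_part f i c.\<close>

lemma sub_op_update:
  assumes zs: "length zs = ar f" and i: "i < ar f" and xy: "(x, y) \<in> \<beta>"
  shows "(sub (F f (zs[i := y])) (F f (zs[i := x])), linear_part f i (sub y x)) \<in> \<delta>"
proof -
  define r where "r = ar f"
  define t where "t = (\<lambda>v. D (F f ((map (\<lambda>k. v (2*k)) [0..<ar f])[i := D (v 1) (v (2*(Suc r))) (v (2*r))]))
         (F f ((map (\<lambda>k. v (2*k)) [0..<ar f])[i := v (2*r)])) (v (2*(Suc r))))"
  have t: "t \<in> clo ar F" unfolding t_def
    by (intro clo_D_intros clo_op_update)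
  define u where "u = (\<lambda>k. if k < r then zs ! k else if k = r then x else e)"
  have ce: "\<And>j. ((\<lambda>_. sub y x) j, (\<lambda>_. e) j) \<in> \<beta>"
    using D_cong[OF \<beta>_cong \<beta>_sym[OF xy] \<beta>_refl[of x] \<beta>_refl[of e]] by simp
  from centralizes_malcev_shift[where c="\<lambda>_. sub y x" and c'="\<lambda>_. e" and u=u and u'="\<lambda>_. e",
      OF central d_clo malcev_left malcev_right \<delta>_cong t ce]
  have 1: "(t (mrg u (\<lambda>_. sub y x)),
      D (t (mrg u (\<lambda>_. e))) (t (mrg (\<lambda>_. e) (\<lambda>_. e))) (t (mrg (\<lambda>_. e) (\<lambda>_. sub y x)))) \<in> \<delta>" .
  have mz: "map (\<lambda>k. u k) [0..<ar f] = zs"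
    by (rule nth_equalityI) (auto simp: u_def zs r_def)
  have mrg2: "mrg a w (2*k) = a k" for a w k
    by (simp add: mrg_def)
  have ur: "u r = x" "u (Suc r) = e" by (simp_all add: u_def)
  have "t (mrg u (\<lambda>_. sub y x)) = sub (F f (zs[i := add (sub y x) x])) (F f (zs[i := x]))"
    "t (mrg u (\<lambda>_. e)) = e" "t (mrg (\<lambda>_. e) (\<lambda>_. e)) = e"
    "t (mrg (\<lambda>_. e) (\<lambda>_. sub y x)) = linear_part f i (sub y x)"
    unfolding t_def mrg2 mz ur linear_part_def by (simp_all add: map_replicate_const mrg_def)
  with 1 have A: "(sub (F f (zs[i := add (sub y x) x])) (F f (zs[i := x])), linear_part f i (sub y x)) \<in> \<delta>"
    by simp
  have "(sub (F f (zs[i := y])) (F f (zs[i := x])), sub (F f (zs[i := add (sub y x) x])) (F f (zs[i := x]))) \<in> \<delta>"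
    using \<delta>_sym[OF sub_add_cancel_mod[OF \<beta>_sym[OF xy]]]
    by (intro D_cong[OF \<delta>_cong _ \<delta>_refl \<delta>_refl] is_cong_op[OF \<delta>_cong])
      (auto simp: zs nth_list_update_if \<delta>_refl)
  with A show ?thesis using \<delta>_trans by blast
qed

lemma linear_part_add:
  assumes u: "u \<in> block" and u': "u' \<in> block" and i: "i < ar f"
  shows "(linear_part f i (add u u'), add (linear_part f i u) (linear_part f i u')) \<in> \<delta>"
proof -
  define os where "os = replicate (ar f) e"
  define a where "a = F f os"
  define b where "b = F f (os[i := u])"
  define c where "c = F f (os[i := add u u'])"
  have uo: "(u, e) \<in> \<beta>" "(u', e) \<in> \<beta>" using u u' by (auto simp: block_def)
  have ab: "(a, b) \<in> \<beta>" unfolding a_def b_def os_def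
    by (intro is_cong_op[OF \<beta>_cong]) (auto simp: nth_list_update_if \<beta>_refl \<beta>_sym uo)
  have uu': "(u, add u u') \<in> \<beta>"
    using D_cong[OF \<beta>_cong \<beta>_refl[of u] \<beta>_refl[of e] \<beta>_sym[OF uo(2)]] by simp
  then have bc: "(b, c) \<in> \<beta>" unfolding b_def c_def os_def
    by (intro is_cong_op[OF \<beta>_cong]) (auto simp: nth_list_update_if \<beta>_refl)
  have ca: "sub c a = linear_part f i (add u u')" "sub b a = linear_part f i u"
    by (simp_all add: a_def b_def c_def os_def linear_part_def)
  have "(sub c b, linear_part f i (sub (add u u') u)) \<in> \<delta>"
    using sub_op_update[of os f i u "add u u'"] uu' i by (simp add: os_def b_def c_def)
  moreover have "(linear_part f i (sub (add u u') u), linear_part f i u') \<in> \<delta>"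
    by (rule linear_part_cong[OF add_sub_cancel_left_mod[OF uo]])
  ultimately have "(sub c b, linear_part f i u') \<in> \<delta>" using \<delta>_trans by blast
  then have "(add (sub b a) (sub c b), add (linear_part f i u) (linear_part f i u')) \<in> \<delta>"
    unfolding ca by (rule D_cong[OF \<delta>_cong \<delta>_refl \<delta>_refl])
  with sub_chain_mod[OF ab bc] show ?thesis unfolding ca using \<delta>_trans by blast
qed

end

context central_pair
begin

definition cls :: "'a \<Rightarrow> 'a set" where "cls x = \<delta> `` {x}"

definition rep :: "'a set \<Rightarrow> 'a" where "rep X = (SOME x. x \<in> X)"

definition G :: "'a set monoid" where
  "G = \<lparr>carrier = cls ` block, mult = (\<lambda>X Y. cls (add (rep X) (rep Y))), one = cls e\<rparr>"

lemma cls_eq_iff: "cls x = cls y \<longleftrightarrow> (x, y) \<in> \<delta>"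
  unfolding cls_def using \<delta>_cong equiv_class_eq_iff[of UNIV \<delta>] by (simp add: is_cong_def)

lemma rep_cls: "(x, rep (cls x)) \<in> \<delta>"
proof -
  have "x \<in> cls x" unfolding cls_def using \<delta>_refl by simp
  then have "rep (cls x) \<in> cls x" unfolding rep_def by (rule someI)
  then show ?thesis unfolding cls_def by simp
qed

lemma carrier_G: "carrier G = cls ` block"
  by (simp add: G_def)

lemma one_G: "\<one>\<^bsub>G\<^esub> = cls e"
  by (simp add: G_def)

lemma mult_G_cls: "cls x \<otimes>\<^bsub>G\<^esub> cls y = cls (add x y)"
proof -
  have "(add (rep (cls x)) (rep (cls y)), add x y) \<in> \<delta>"
    by (rule D_cong[OF \<delta>_cong \<delta>_sym[OF rep_cls] \<delta>_refl \<delta>_sym[OF rep_cls]])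
  then show ?thesis unfolding G_def by (simp add: cls_eq_iff)
qed

lemma cls_in_carrier_G[simp]: "x \<in> block \<Longrightarrow> cls x \<in> carrier G"
  by (simp add: carrier_G)

lemma cls_rep: "X \<in> carrier G \<Longrightarrow> cls (rep X) = X"
  using rep_cls cls_eq_iff \<delta>_sym by (auto simp: carrier_G)

lemma comm_group_G: "comm_group G"
proof (rule comm_groupI)
  fix X Y assume "X \<in> carrier G" "Y \<in> carrier G"
  then obtain x y where xy: "x \<in> block" "y \<in> block" "X = cls x" "Y = cls y"
    by (auto simp: carrier_G)
  then show "X \<otimes>\<^bsub>G\<^esub> Y \<in> carrier G" by (simp add: mult_G_cls add_block)
  show "X \<otimes>\<^bsub>G\<^esub> Y = Y \<otimes>\<^bsub>G\<^esub> X"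
    using xy by (simp add: mult_G_cls cls_eq_iff add_comm_mod block_def)
next
  show "\<one>\<^bsub>G\<^esub> \<in> carrier G" by (simp add: one_G)
next
  fix X Y Z assume "X \<in> carrier G" "Y \<in> carrier G" "Z \<in> carrier G"
  then obtain x y z where "x \<in> block" "y \<in> block" "z \<in> block" "X = cls x" "Y = cls y" "Z = cls z"
    by (auto simp: carrier_G)
  then show "X \<otimes>\<^bsub>G\<^esub> Y \<otimes>\<^bsub>G\<^esub> Z = X \<otimes>\<^bsub>G\<^esub> (Y \<otimes>\<^bsub>G\<^esub> Z)"
    by (simp add: mult_G_cls cls_eq_iff add_assoc_mod block_def)
next
  fix X assume "X \<in> carrier G"
  then obtain x where x: "x \<in> block" "X = cls x" by (auto simp: carrier_G)
  then show "\<one>\<^bsub>G\<^esub> \<otimes>\<^bsub>G\<^esub> X = X" by (simp add: one_G mult_G_cls)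
  have neg: "sub e x \<in> block" using sub_block[of x e] x(1) \<beta>_sym unfolding block_def by blast
  have "(add (sub e x) x, add x (sub e x)) \<in> \<delta>"
    using add_comm_mod neg by (simp add: block_def)
  moreover have "(add x (sub e x), e) \<in> \<delta>" using add_neg_mod x by (simp add: block_def)
  ultimately have "cls (sub e x) \<otimes>\<^bsub>G\<^esub> X = \<one>\<^bsub>G\<^esub>"
    using x \<delta>_trans by (simp add: mult_G_cls one_G cls_eq_iff)
  then show "\<exists>Y\<in>carrier G. Y \<otimes>\<^bsub>G\<^esub> X = \<one>\<^bsub>G\<^esub>" using neg by (auto simp: carrier_G)
qed

lemma finite_carrier_G: "finite (carrier G)"
  by (simp add: carrier_G)

lemma card_carrier_G_pos: "0 < card (carrier G)"
  using finite_carrier_G cls_in_carrier_G[OF e_block] card_gt_0_iff by blast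

definition linear_map :: "'f \<Rightarrow> nat \<Rightarrow> 'a set \<Rightarrow> 'a set" where
  "linear_map f i X = cls (linear_part f i (rep X))"

lemma linear_map_cls: "linear_map f i (cls u) = cls (linear_part f i u)"
  unfolding linear_map_def cls_eq_iff by (rule linear_part_cong[OF \<delta>_sym[OF rep_cls]])

lemma linear_map_in_carrier_G: "X \<in> carrier G \<Longrightarrow> linear_map f i X \<in> carrier G"
  by (auto simp: carrier_G linear_map_cls linear_part_block)

lemma linear_map_finprod:
  assumes "i < ar f" "finite A" "g \<in> A \<rightarrow> carrier G"
  shows "linear_map f i (finprod G g A) = finprod G (\<lambda>a. linear_map f i (g a)) A"
proof (rule comm_monoid.finprod_endomorphism)
  show "comm_monoid G" using comm_group_G by (rule comm_group.axioms)
  fix X Y assume "X \<in> carrier G" "Y \<in> carrier G"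
  then obtain x y where "x \<in> block" "y \<in> block" "X = cls x" "Y = cls y" by (auto simp: carrier_G)
  then show "linear_map f i (X \<otimes>\<^bsub>G\<^esub> Y) = linear_map f i X \<otimes>\<^bsub>G\<^esub> linear_map f i Y"
    using assms(1) by (simp add: mult_G_cls linear_map_cls cls_eq_iff linear_part_add)
qed (use assms linear_map_in_carrier_G in \<open>auto simp: one_G linear_map_cls\<close>)

end

section \<open>Offsets of node values\<close>

context central_pair
begin

text \<open>Telescoping along the hybrid argument lists that take their first k entries from ys and
  the others from xs.\<close>

lemma cls_sub_op:
  assumes xs: "length xs = ar f" and ys: "length ys = ar f"
    and xy: "\<And>i. i < ar f \<Longrightarrow> (xs ! i, ys ! i) \<in> \<beta>"
  shows "cls (sub (F f ys) (F f xs)) =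
    finprod G (\<lambda>i. cls (linear_part f i (sub (ys ! i) (xs ! i)))) {..<ar f}"
proof -
  interpret comm_group G by (rule comm_group_G)
  define zs where "zs k = map (\<lambda>j. if j < k then ys ! j else xs ! j) [0..<ar f]" for k
  have zl: "length (zs k) = ar f" for k by (simp add: zs_def)
  have zn: "j < ar f \<Longrightarrow> zs k ! j = (if j < k then ys ! j else xs ! j)" for k j
    by (simp add: zs_def)
  have xz: "(F f xs, F f (zs k)) \<in> \<beta>" for k
    by (rule is_cong_op[OF \<beta>_cong xs zl]) (simp add: zn xy \<beta>_refl)
  have cl: "\<And>i. i < ar f \<Longrightarrow> cls (linear_part f i (sub (ys ! i) (xs ! i))) \<in> carrier G"
    using xy by (simp add: linear_part_block sub_block)
  have "cls (sub (F f (zs k)) (F f xs)) =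
      finprod G (\<lambda>i. cls (linear_part f i (sub (ys ! i) (xs ! i)))) {..<k}" if "k \<le> ar f" for k
    using that
  proof (induction k)
    case 0
    have "zs 0 = xs" by (rule nth_equalityI) (simp_all add: zl zn xs)
    then show ?case by (simp add: one_G[symmetric])
  next
    case (Suc k)
    then have k: "k < ar f" by simp
    have z1: "zs (Suc k) = (zs k)[k := ys ! k]"
      by (rule nth_equalityI) (auto simp: zl zn nth_list_update_if)
    have z0: "zs k = (zs k)[k := xs ! k]"
      by (rule nth_equalityI) (auto simp: zl zn nth_list_update_if)
    have "(F f (zs k), F f (zs (Suc k))) \<in> \<beta>"
      by (rule is_cong_op[OF \<beta>_cong zl zl]) (simp add: zn xy \<beta>_refl k)
    then have "cls (sub (F f (zs (Suc k))) (F f xs)) =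
        cls (sub (F f (zs k)) (F f xs)) \<otimes>\<^bsub>G\<^esub> cls (sub (F f (zs (Suc k))) (F f (zs k)))"
      using sub_chain_mod[OF xz] by (simp add: mult_G_cls cls_eq_iff)
    also have "cls (sub (F f (zs (Suc k))) (F f (zs k))) = cls (linear_part f k (sub (ys ! k) (xs ! k)))"
      using sub_op_update[OF zl[of k] k xy[OF k]] unfolding cls_eq_iff z1 by (simp only: z0[symmetric])
    finally show ?case
      using Suc k cl by (simp add: lessThan_Suc m_comm Pi_def)
  qed
  moreover have "zs (ar f) = ys" by (rule nth_equalityI) (simp_all add: zl zn ys)
  ultimately show ?thesis by auto
qed

definition canon :: "'a \<Rightarrow> 'a" where "canon x = (SOME y. y \<in> \<beta> `` {x})"

lemma canon_\<beta>: "(x, canon x) \<in> \<beta>"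
proof -
  have "x \<in> \<beta> `` {x}" using \<beta>_refl by simp
  then have "canon x \<in> \<beta> `` {x}" unfolding canon_def by (rule someI)
  then show ?thesis by simp
qed

lemma canon_eq: "(x, y) \<in> \<beta> \<Longrightarrow> canon x = canon y"
  using \<beta>_cong equiv_class_eq[of UNIV \<beta>] by (simp add: is_cong_def canon_def)

definition offset :: "'a \<Rightarrow> 'a set" where "offset x = cls (sub x (canon x))"

lemma offset_in_carrier_G: "offset x \<in> carrier G"
  unfolding offset_def using sub_block[OF \<beta>_sym[OF canon_\<beta>]] by simp

lemma eq_offset_imp_\<delta>:
  assumes "(x, y) \<in> \<beta>" "offset x = offset y"
  shows "(x, y) \<in> \<delta>"
proof -
  define R where "R = canon x"
  have R: "R = canon y" unfolding R_def by (rule canon_eq[OF assms(1)])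
  have "(sub x R, sub y R) \<in> \<delta>"
    using assms(2) unfolding offset_def R_def R[symmetric] by (simp add: cls_eq_iff)
  then have xy: "(add (sub x R) R, add (sub y R) R) \<in> \<delta>"
    by (rule D_cong[OF \<delta>_cong _ \<delta>_refl \<delta>_refl])
  have x: "(add (sub x R) R, x) \<in> \<delta>" unfolding R_def by (rule sub_add_cancel_mod[OF canon_\<beta>])
  have y: "(add (sub y R) R, y) \<in> \<delta>" unfolding R by (rule sub_add_cancel_mod[OF canon_\<beta>])
  show ?thesis by (rule \<delta>_trans[OF \<delta>_sym[OF x] \<delta>_trans[OF xy y]])
qed

lemma offset_op:
  assumes ys: "length ys = ar f"
  shows "offset (F f ys) =
    offset (F f (map canon ys)) \<otimes>\<^bsub>G\<^esub> finprod G (\<lambda>i. linear_map f i (offset (ys ! i))) {..<ar f}"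
proof -
  define rs where "rs = map canon ys"
  have rs: "length rs = ar f" using ys by (simp add: rs_def)
  have ry: "(rs ! i, ys ! i) \<in> \<beta>" if "i < ar f" for i
    using that ys \<beta>_sym[OF canon_\<beta>] by (simp add: rs_def)
  have FF: "(F f rs, F f ys) \<in> \<beta>" by (rule is_cong_op[OF \<beta>_cong rs ys ry])
  define R where "R = canon (F f ys)"
  have R: "R = canon (F f rs)" unfolding R_def by (rule canon_eq[OF \<beta>_sym[OF FF]])
  have "offset (F f ys) = cls (sub (F f rs) R) \<otimes>\<^bsub>G\<^esub> cls (sub (F f ys) (F f rs))"
    using sub_chain_mod[OF \<beta>_sym[OF canon_\<beta>] FF] unfolding offset_def R_def[symmetric] R
    by (simp add: mult_G_cls cls_eq_iff)
  also have "cls (sub (F f ys) (F f rs)) =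
      finprod G (\<lambda>i. cls (linear_part f i (sub (ys ! i) (rs ! i)))) {..<ar f}"
    by (rule cls_sub_op[OF rs ys ry])
  also have "\<dots> = finprod G (\<lambda>i. linear_map f i (offset (ys ! i))) {..<ar f}"
  proof (rule comm_monoid.finprod_cong'[OF comm_group.axioms(1)[OF comm_group_G]])
    fix i assume "i \<in> {..<ar f}"
    then show "cls (linear_part f i (sub (ys ! i) (rs ! i))) = linear_map f i (offset (ys ! i))"
      using ys by (simp add: rs_def offset_def linear_map_cls)
  qed (auto simp: linear_map_in_carrier_G offset_in_carrier_G)
  finally show ?thesis unfolding offset_def R rs_def .
qed

end

context central_pair
begin

definition expansion :: "('f, 'a) cnode list \<Rightarrow> nat \<Rightarrow> (nat \<Rightarrow> 'a list \<Rightarrow> 'a set) \<Rightarrow> bool" where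
  "expansion C v h \<longleftrightarrow> (\<forall>w l. h w l \<in> carrier G) \<and>
     (\<forall>vs. is_valuation F C vs \<longrightarrow>
        offset (vs ! v) = finprod G (\<lambda>w. h w (local_view canon C vs w)) {..<length C})"

lemma expansion_leaf:
  assumes v: "v < length C" and leaf: "\<And>f args. C ! v \<noteq> Gt f args"
  shows "expansion C v (\<lambda>w l. if w = v then offset (hd l) else \<one>\<^bsub>G\<^esub>)"
  unfolding expansion_def
proof (intro conjI allI impI)
  interpret comm_group G by (rule comm_group_G)
  fix vs
  have "local_view canon C vs v = [vs ! v]"
    using leaf unfolding local_view_def by (cases "C ! v") auto
  then show "offset (vs ! v) = finprod G (\<lambda>w. if w = v then offset (hd (local_view canon C vs w))
      else \<one>\<^bsub>G\<^esub>) {..<length C}"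
    using finprod_singleton_swap[of v "{..<length C}" "\<lambda>_. offset (vs ! v)"] v offset_in_carrier_G
    by (simp cong: if_cong)
qed (simp add: offset_in_carrier_G one_G)

lemma expansion_gate:
  assumes wf: "gates_wf ar C" and v: "v < length C" and gate: "C ! v = Gt f args"
    and args: "\<And>i. i < ar f \<Longrightarrow> expansion C (args ! i) (hs i)"
  shows "expansion C v (\<lambda>w l. (if w = v then offset (F f l) else \<one>\<^bsub>G\<^esub>) \<otimes>\<^bsub>G\<^esub>
    finprod G (\<lambda>i. linear_map f i (hs i w l)) {..<ar f})"
  unfolding expansion_def
proof (intro conjI allI impI)
  interpret comm_group G by (rule comm_group_G)
  have hs: "hs i w l \<in> carrier G" if "i < ar f" for i w l
    using args[OF that] by (simp add: expansion_def)
  then show "(if w = v then offset (F f l) else \<one>\<^bsub>G\<^esub>) \<otimes>\<^bsub>G\<^esub> finprod G (\<lambda>i. linear_map f i (hs i w l)) {..<ar f}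
      \<in> carrier G" for w l
    by (simp add: offset_in_carrier_G linear_map_in_carrier_G Pi_def)
  fix vs assume vs: "is_valuation F C vs"
  let ?lv = "local_view canon C vs"
  define ys where "ys = map (\<lambda>k. vs ! k) args"
  have ys: "length ys = ar f" using wf v gate unfolding gates_wf_def ys_def by force
  have "vs ! v = F f ys" using vs v gate unfolding is_valuation_def ys_def by force
  then have "offset (vs ! v) = offset (F f (map canon ys)) \<otimes>\<^bsub>G\<^esub>
      finprod G (\<lambda>i. linear_map f i (offset (ys ! i))) {..<ar f}"
    using offset_op[OF ys] by simp
  also have "offset (F f (map canon ys)) =
      finprod G (\<lambda>w. if w = v then offset (F f (?lv w)) else \<one>\<^bsub>G\<^esub>) {..<length C}"
    using finprod_singleton_swap[of v "{..<length C}" "\<lambda>_. offset (F f (?lv v))"] v gate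
    by (simp add: offset_in_carrier_G local_view_def ys_def o_def cong: if_cong)
  also have "finprod G (\<lambda>i. linear_map f i (offset (ys ! i))) {..<ar f} =
      finprod G (\<lambda>i. finprod G (\<lambda>w. linear_map f i (hs i w (?lv w))) {..<length C}) {..<ar f}"
  proof (rule finprod_cong')
    fix i assume i: "i \<in> {..<ar f}"
    then have "offset (ys ! i) = finprod G (\<lambda>w. hs i w (?lv w)) {..<length C}"
      using args[of i] vs ys unfolding expansion_def ys_def by simp
    then show "linear_map f i (offset (ys ! i)) =
        finprod G (\<lambda>w. linear_map f i (hs i w (?lv w))) {..<length C}"
      using i hs by (simp add: linear_map_finprod Pi_def)
  qed (auto simp: hs linear_map_in_carrier_G)
  also have "\<dots> = finprod G (\<lambda>w. finprod G (\<lambda>i. linear_map f i (hs i w (?lv w))) {..<ar f}) {..<length C}"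
    by (rule finprod_swap) (auto simp: hs linear_map_in_carrier_G)
  finally show "offset (vs ! v) = finprod G (\<lambda>w. (if w = v then offset (F f (?lv w)) else \<one>\<^bsub>G\<^esub>) \<otimes>\<^bsub>G\<^esub>
      finprod G (\<lambda>i. linear_map f i (hs i w (?lv w))) {..<ar f}) {..<length C}"
    by (simp add: hs offset_in_carrier_G linear_map_in_carrier_G Pi_def)
qed

lemma expansion_exists:
  assumes wf: "gates_wf ar C"
  shows "v < length C \<Longrightarrow> \<exists>h. expansion C v h"
proof (induction v rule: less_induct)
  case (less v)
  show ?case
  proof (cases "\<exists>f args. C ! v = Gt f args")
    case False
    then show ?thesis using expansion_leaf[OF less.prems] by blast
  next
    case True
    then obtain f args where gate: "C ! v = Gt f args" by blast
    have "length args = ar f" "\<forall>k\<in>set args. k < v"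
      using wf less.prems gate unfolding gates_wf_def by force+
    then have "args ! i < v" if "i < ar f" for i
      using that by simp
    then have "\<forall>i\<in>{..<ar f}. \<exists>h. expansion C (args ! i) h"
      using less.IH less.prems by auto
    from bchoice[OF this] obtain hs where "\<forall>i\<in>{..<ar f}. expansion C (args ! i) (hs i)" ..
    then have "\<And>i. i < ar f \<Longrightarrow> expansion C (args ! i) (hs i)" by simp
    then show ?thesis using expansion_gate[OF wf less.prems gate] by blast
  qed
qed

end

lemma (in central_pair) expansion_counts:
  assumes h: "expansion C v h" and vs: "is_valuation F C vs" and vs': "is_valuation F C vs'"
    and \<beta>: "(vs ! v, vs' ! v) \<in> \<beta>"
    and counts: "\<And>a. card {w. w < length C \<and> rep (h w (local_view canon C vs w)) = a} mod card (carrier G) =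
      card {w. w < length C \<and> rep (h w (local_view canon C vs' w)) = a} mod card (carrier G)"
  shows "(vs ! v, vs' ! v) \<in> \<delta>"
proof (rule eq_offset_imp_\<delta>[OF \<beta>])
  interpret comm_group G by (rule comm_group_G)
  have hG: "h w l \<in> carrier G" for w l using h by (simp add: expansion_def)
  have "offset (us ! v) = finprod G (\<lambda>a. cls a [^]\<^bsub>G\<^esub>
      (card {w. w < length C \<and> rep (h w (local_view canon C us w)) = a} mod card (carrier G)))
      (rep ` carrier G)"
    if "is_valuation F C us" for us
  proof -
    have "offset (us ! v) = finprod G (\<lambda>w. cls (rep (h w (local_view canon C us w)))) {..<length C}"
      using h that hG by (simp add: expansion_def cls_rep)
    also have "\<dots> = finprod G (\<lambda>a. cls a [^]\<^bsub>G\<^esub>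
      (card {w. w < length C \<and> rep (h w (local_view canon C us w)) = a} mod card (carrier G)))
      (rep ` carrier G)"
      by (rule finprod_by_counts) (auto simp: finite_carrier_G cls_rep hG)
    finally show ?thesis .
  qed
  then show "offset (vs ! v) = offset (vs' ! v)" using vs vs' counts by simp
qed

text \<open>g C v w sends the local view at node w to (a representative of) the contribution of w
  to the offset at v.\<close>

definition refines_by_counts :: "('f \<Rightarrow> nat) \<Rightarrow> ('f \<Rightarrow> 'a list \<Rightarrow> 'a) \<Rightarrow> ('a \<times> 'a) set \<Rightarrow>
    ('a \<times> 'a) set \<Rightarrow> ('a \<Rightarrow> 'a) \<Rightarrow> nat \<Rightarrow> (('f, 'a) cnode list \<Rightarrow> nat \<Rightarrow> nat \<Rightarrow> 'a list \<Rightarrow> 'a) \<Rightarrow> bool"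
  where
  "refines_by_counts ar F \<beta> \<delta> \<rho> M g \<longleftrightarrow> 0 < M \<and> (\<forall>x y. (x, y) \<in> \<beta> \<longrightarrow> \<rho> x = \<rho> y) \<and>
     (\<forall>C vs vs' v. gates_wf ar C \<longrightarrow> is_valuation F C vs \<longrightarrow> is_valuation F C vs' \<longrightarrow>
        v < length C \<longrightarrow> (vs ! v, vs' ! v) \<in> \<beta> \<longrightarrow>
        (\<forall>a. card {w. w < length C \<and> g C v w (local_view \<rho> C vs w) = a} mod M =
             card {w. w < length C \<and> g C v w (local_view \<rho> C vs' w) = a} mod M) \<longrightarrow>
        (vs ! v, vs' ! v) \<in> \<delta>)"

lemma (in central_pair) refines_by_counts_canon:
  "\<exists>g. refines_by_counts ar F \<beta> \<delta> canon (card (carrier G)) g"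
proof -
  define g where "g C v w l = rep ((SOME h. expansion C v h) w l)" for C v w l
  have "expansion C v (SOME h. expansion C v h)" if "gates_wf ar C" "v < length C" for C v
    using someI_ex[OF expansion_exists[OF that]] .
  then have "refines_by_counts ar F \<beta> \<delta> canon (card (carrier G)) g"
    unfolding refines_by_counts_def g_def
    using card_carrier_G_pos canon_eq expansion_counts by blast
  then show ?thesis by blast
qed

lemma refines_by_counts_if_central:
  fixes F :: "'f \<Rightarrow> 'a::finite list \<Rightarrow> 'a"
  assumes "has_malcev ar F" "is_cong ar F \<beta>" "is_cong ar F \<delta>" "centralizes ar F UNIV \<beta> \<delta>"
  shows "\<exists>\<rho> M g. refines_by_counts ar F \<beta> \<delta> \<rho> M g"
proof -
  obtain d where "d \<in> clo ar F" "\<And>x y. d (tup3 x y y) = x" "\<And>x y. d (tup3 y y x) = x"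
    using assms(1) unfolding has_malcev_def by blast
  \<comment> \<open>any base point will do\<close>
  then interpret central_pair ar F d \<beta> \<delta> undefined
    using assms(2-4) by unfold_locales
  show ?thesis using refines_by_counts_canon by blast
qed

lemma nilpotent_refines_by_counts:
  fixes F :: "'f \<Rightarrow> 'a::finite list \<Rightarrow> 'a"
  assumes "has_malcev ar F" "nilpotent ar F"
  obtains K \<rho> M g where "lcs ar F K = Id"
    "\<And>j. refines_by_counts ar F (lcs ar F j) (lcs ar F (Suc j)) (\<rho> j) (M j) (g j)"
proof -
  obtain K where "lcs ar F K = Id" using assms(2) unfolding nilpotent_def by blast
  moreover have "\<forall>j. \<exists>\<rho> M g. refines_by_counts ar F (lcs ar F j) (lcs ar F (Suc j)) \<rho> M g"
  proof
    fix j
    show "\<exists>\<rho> M g. refines_by_counts ar F (lcs ar F j) (lcs ar F (Suc j)) \<rho> M g"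
      by (rule refines_by_counts_if_central[OF assms(1) lcs_is_cong lcs_is_cong])
        (simp add: centralizes_commutator)
  qed
  then obtain \<rho> M g where "\<And>j. refines_by_counts ar F (lcs ar F j) (lcs ar F (Suc j)) (\<rho> j) (M j) (g j)"
    by metis
  ultimately show ?thesis using that by blast
qed

section \<open>MOD circuits\<close>

definition mod_values :: "nat \<Rightarrow> bool list \<Rightarrow> mnode list \<Rightarrow> bool list" where
  "mod_values m x C = foldl (mstep m x) [] C"

definition depth_values :: "mnode list \<Rightarrow> nat list" where
  "depth_values C = foldl dstep [] C"

lemma
  shows length_mod_values: "length (mod_values m x C) = length C"
    and nth_mod_values: "j < length C \<Longrightarrow> mod_values m x C ! j =
      (case C ! j of MIn i \<Rightarrow> x ! i
         | MGate T args \<Rightarrow>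
             sum_list (map (\<lambda>k. if take j (mod_values m x C) ! k then 1 else 0) args) mod m \<in> T)"
  unfolding mod_values_def
  using foldl_snoc_step[where f="mstep m x" and C=C and \<phi>="\<lambda>vals nd. case nd of MIn i \<Rightarrow> x ! i
      | MGate T args \<Rightarrow> (sum_list (map (\<lambda>k. if vals ! k then 1 else 0) args) mod m) \<in> T"]
  by (simp_all add: mstep_def)

lemma
  shows length_depth_values: "length (depth_values C) = length C"
    and nth_depth_values: "j < length C \<Longrightarrow> depth_values C ! j =
      (case C ! j of MIn i \<Rightarrow> 0
         | MGate T args \<Rightarrow> Suc (fold max (map (\<lambda>k. take j (depth_values C) ! k) args) 0))"
  unfolding depth_values_def
  using foldl_snoc_step[where f="dstep" and C=C and \<phi>="\<lambda>ds nd. case nd of MIn i \<Rightarrow> 0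
      | MGate T args \<Rightarrow> Suc (fold max (map (\<lambda>k. ds ! k) args) 0)"]
  by (simp_all add: dstep_def)

lemma meval_eq_nth: "C \<noteq> [] \<Longrightarrow> meval m x C = mod_values m x C ! (length C - 1)"
  unfolding meval_def mod_values_def[symmetric]
  by (metis last_conv_nth length_0_conv length_mod_values)

lemma mdepth_eq_nth: "C \<noteq> [] \<Longrightarrow> mdepth C = depth_values C ! (length C - 1)"
  unfolding mdepth_def depth_values_def[symmetric]
  by (metis last_conv_nth length_0_conv length_depth_values)

lemma nth_mod_values_eqI:
  assumes "\<And>j. j < length C \<Longrightarrow> (case C ! j of MIn i \<Rightarrow> P j = x ! i
      | MGate T args \<Rightarrow> (\<forall>k\<in>set args. k < j) \<and>
          (P j \<longleftrightarrow> sum_list (map (\<lambda>k. if P k then 1 else 0) args) mod m \<in> T))"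
  shows "j < length C \<Longrightarrow> mod_values m x C ! j = P j"
proof (induction j rule: less_induct)
  case (less j)
  show ?case
  proof (cases "C ! j")
    case (MIn i)
    then show ?thesis using assms[OF less.prems] nth_mod_values[OF less.prems] by simp
  next
    case (MGate T args)
    then have args: "\<forall>k\<in>set args. k < j"
      and P: "P j \<longleftrightarrow> sum_list (map (\<lambda>k. if P k then 1 else 0) args) mod m \<in> T"
      using assms[OF less.prems] by simp_all
    have eq: "map (\<lambda>k. if take j (mod_values m x C) ! k then 1 else 0) args =
        map (\<lambda>k. if P k then 1 else (0::nat)) args"
      using args less by (intro map_cong) auto
    show ?thesis using P MGate nth_mod_values[OF less.prems, of m x] by (simp add: eq)
  qed
qed

lemma nth_depth_values_le:
  assumes "\<And>j. j < length C \<Longrightarrow> (case C ! j of MIn i \<Rightarrow> True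
      | MGate T args \<Rightarrow> 0 < r j \<and> (\<forall>k\<in>set args. k < j \<and> r k < r j))"
  shows "j < length C \<Longrightarrow> depth_values C ! j \<le> r j"
proof (induction j rule: less_induct)
  case (less j)
  show ?case
  proof (cases "C ! j")
    case (MGate T args)
    then have r: "0 < r j" and args: "\<forall>k\<in>set args. k < j \<and> r k < r j"
      using assms[OF less.prems] by simp_all
    have "fold max (map (\<lambda>k. take j (depth_values C) ! k) args) a \<le> r j - 1" if "a \<le> r j - 1" for a
      using that args less by (induction args arbitrary: a) fastforce+
    then have "fold max (map (\<lambda>k. take j (depth_values C) ! k) args) 0 \<le> r j - 1" by simp
    then show ?thesis using r MGate nth_depth_values[OF less.prems] by simp
  qed (simp add: nth_depth_values[OF less.prems])
qed

text \<open>Feeding wire number i of a list 2^i times into a MOD gate makes the sum of its inputs the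
  binary number they encode, so a single MOD_m gate with m large enough can evaluate any
  Boolean function of boundedly many inputs.\<close>

fun bin_value :: "bool list \<Rightarrow> nat" where
  "bin_value [] = 0"
| "bin_value (x # xs) = (if x then 1 else 0) + 2 * bin_value xs"

fun bin_wires :: "nat list \<Rightarrow> nat list" where
  "bin_wires [] = []"
| "bin_wires (w # ws) = w # bin_wires ws @ bin_wires ws"

lemma sum_bin_wires:
  "sum_list (map (\<lambda>k. if P k then 1 else 0) (bin_wires ws)) = bin_value (map P ws)"
  by (induction ws) auto

lemma length_bin_wires: "length (bin_wires ws) + 1 = 2 ^ length ws"
  by (induction ws) auto

lemma set_bin_wires: "set (bin_wires ws) = set ws"
  by (induction ws) auto

lemma bin_value_less: "bin_value xs < 2 ^ length xs"
  by (induction xs) auto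

lemma bin_value_inj: "length xs = length ys \<Longrightarrow> bin_value xs = bin_value ys \<Longrightarrow> xs = ys"
proof (induction xs arbitrary: ys)
  case (Cons x xs)
  then obtain y ys' where ys: "ys = y # ys'" by (cases ys) auto
  with Cons.prems have e: "(if x then 1 else 0) + 2 * bin_value xs = (if y then 1 else 0) + 2 * bin_value ys'"
    by simp
  then have "x = y" by (cases x; cases y; simp; presburger)
  with e Cons ys show ?case by simp
qed simp

lemma sum_list_indicator_upt:
  "sum_list (map (\<lambda>w. if P w then 1 else 0) [0..<N]) = card {w. w < N \<and> P w}"
proof (induction N)
  case (Suc N)
  have "{w. w < Suc N \<and> P w} = {w. w < N \<and> P w} \<union> (if P N then {N} else {})"
    by (auto simp: less_Suc_eq)
  then show ?case using Suc by (auto simp: card_insert_if)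
qed simp

lemma length_concat_map_le:
  "(\<And>x. x \<in> set xs \<Longrightarrow> length (f x) \<le> B) \<Longrightarrow> length xs \<le> L \<Longrightarrow> length (concat (map f xs)) \<le> L * B"
proof (induction xs arbitrary: L)
  case (Cons x xs)
  then show ?case by (cases L) (auto simp: add_mono)
qed simp

lemma sum_list_bounded_by_length:
  "(\<And>x. x \<in> set xs \<Longrightarrow> f x \<le> (B::nat)) \<Longrightarrow> sum_list (map f xs) \<le> length xs * B"
  by (induction xs) (fastforce intro: add_mono)+

lemma three_products_le:
  fixes K N p m :: nat
  shows "Suc K * (N * p) + K * (N * (N * p)) + K * (N * (p * m)) \<le>
    3 * ((K+1) * ((N + 1) * ((N + 1) * ((p + 1) * (m + 1)))))"
proof -
  define Z where "Z = (K+1) * ((N + 1) * ((N + 1) * ((p + 1) * (m + 1))))"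
  have p: "p \<le> (p + 1) * (m + 1)" by simp
  then have Np: "p \<le> (N + 1) * ((p + 1) * (m + 1))" using le_add2 order.trans by fastforce
  have "p * m \<le> (p + 1) * (m + 1)" by (rule mult_le_mono) simp_all
  then have pm: "p * m \<le> (N + 1) * ((p + 1) * (m + 1))" using le_add2 order.trans by fastforce
  have "Suc K * (N * p) \<le> Z" unfolding Z_def
    by (rule mult_le_mono[OF _ mult_le_mono[OF _ Np]]) simp_all
  moreover have "K * (N * (N * p)) \<le> Z" unfolding Z_def
    by (rule mult_le_mono[OF _ mult_le_mono[OF _ mult_le_mono[OF _ p]]]) simp_all
  moreover have "K * (N * (p * m)) \<le> Z" unfolding Z_def
    by (rule mult_le_mono[OF _ mult_le_mono[OF _ pm]]) simp_all
  ultimately show ?thesis unfolding Z_def by linarith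
qed

lemma add_le_poly:
  fixes n N c k :: nat
  assumes n: "1 \<le> n" and N: "N \<le> c * n ^ k"
  shows "n + N + 1 \<le> (c + 2) * n ^ (k + 1)"
proof -
  define Y where "Y = n ^ (k + 1)"
  have "n \<le> Y" unfolding Y_def using n
    by (metis One_nat_def le_add2 power_increasing power_one_right)
  moreover have "1 \<le> Y" unfolding Y_def using n by simp
  moreover have "n ^ k \<le> Y" unfolding Y_def using n by (intro power_increasing) auto
  then have "N \<le> c * Y" using N order.trans mult_le_mono2 by blast
  ultimately show ?thesis unfolding Y_def[symmetric] by (simp add: algebra_simps)
qed

text \<open>Everything is bounded by a multiple of X^3 with X = n + N + 1.\<close>

lemma translation_size_poly:
  fixes n N K p m c k :: nat
  assumes n: "1 \<le> n" and N: "N \<le> c * n ^ k"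
  shows "(n + 3 * ((K+1) * ((N + 1) * ((N + 1) * ((p + 1) * (m + 1))))) + 1) * (1 + m + N)
     \<le> ((1 + 3 * ((K+1) * ((p+1) * (m+1)))) * (m + 1) * (c + 2) ^ 3) * n ^ (3 * (k + 1))"
proof -
  define X where "X = n + N + 1"
  define Q where "Q = (p + 1) * (m + 1)"
  define W where "W = 1 + 3 * ((K+1) * Q)"
  have X1: "1 \<le> X" by (simp add: X_def)
  have "(K+1) * ((N + 1) * ((N + 1) * Q)) \<le> (K+1) * (X * (X * Q))"
    by (intro mult_le_mono) (auto simp: X_def)
  moreover have "n + 1 \<le> X * X" using X1 by (simp add: X_def)
  ultimately have "n + 3 * ((K+1) * ((N + 1) * ((N + 1) * Q))) + 1 \<le> W * (X * X)"
    by (simp add: W_def algebra_simps)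
  moreover have "1 + m + N \<le> (m + 1) * X" using X1 by (simp add: X_def algebra_simps)
  ultimately have "(n + 3 * ((K+1) * ((N + 1) * ((N + 1) * Q))) + 1) * (1 + m + N) \<le>
      W * (m + 1) * X ^ 3"
    using mult_le_mono by (fastforce simp: power3_eq_cube algebra_simps)
  also have "\<dots> \<le> W * (m + 1) * ((c + 2) * n ^ (k + 1)) ^ 3"
    using add_le_poly[OF n N] by (simp add: X_def power_mono)
  also have "\<dots> = (W * (m + 1) * (c + 2) ^ 3) * n ^ (3 * (k + 1))"
    unfolding power_mult_distrib power_mult[of n "k + 1" 3, symmetric] by (simp add: mult.commute)
  finally show ?thesis by (simp add: W_def Q_def)
qed

section \<open>Translating circuits over A into MOD circuits\<close>

locale counting_levels =
  fixes ar :: "'f \<Rightarrow> nat" and F :: "'f \<Rightarrow> 'a::finite list \<Rightarrow> 'a" and K :: nat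
    and \<rho> :: "nat \<Rightarrow> 'a \<Rightarrow> 'a" and M :: "nat \<Rightarrow> nat"
    and g :: "nat \<Rightarrow> ('f, 'a) cnode list \<Rightarrow> nat \<Rightarrow> nat \<Rightarrow> 'a list \<Rightarrow> 'a"
  assumes lcs_K: "lcs ar F K = Id"
    and refines: "\<And>j. refines_by_counts ar F (lcs ar F j) (lcs ar F (Suc j)) (\<rho> j) (M j) (g j)"
begin

lemma M_pos: "0 < M j"
  using refines by (simp add: refines_by_counts_def)

lemma \<rho>_eq: "(x, y) \<in> lcs ar F j \<Longrightarrow> \<rho> j x = \<rho> j y"
  using refines by (simp add: refines_by_counts_def)

lemma counts_refine:
  assumes "gates_wf ar C" "is_valuation F C vs" "is_valuation F C vs'" "v < length C"
    "(vs ! v, vs' ! v) \<in> lcs ar F j"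
    "\<And>a. card {w. w < length C \<and> g j C v w (local_view (\<rho> j) C vs w) = a} mod M j =
      card {w. w < length C \<and> g j C v w (local_view (\<rho> j) C vs' w) = a} mod M j"
  shows "(vs ! v, vs' ! v) \<in> lcs ar F (Suc j)"
  using refines[of j] assms unfolding refines_by_counts_def by blast

end

datatype 'a label = LInput nat | LClass nat nat 'a | LTerm nat nat nat 'a | LCount nat nat 'a nat
  | LOutput

locale mod_translation = counting_levels ar F K \<rho> M g
  for ar :: "'f \<Rightarrow> nat" and F :: "'f \<Rightarrow> 'a::finite list \<Rightarrow> 'a" and K \<rho> M g +
  fixes m :: nat and elems :: "'a list" and fanin :: nat and \<iota> :: "bool \<Rightarrow> 'a" and S :: "'a set"
  assumes elems: "set elems = UNIV"
    and M_dvd: "\<And>j. j < K \<Longrightarrow> M j dvd m"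
    and fanin_m: "2 ^ fanin \<le> m"
    and fanin_ar: "\<And>f. length elems * ar f \<le> fanin"
    and fanin_M: "\<And>j. j < K \<Longrightarrow> length elems + length elems * M j \<le> fanin"
    and fanin_elems: "length elems \<le> fanin"
begin

lemma one_le_fanin: "1 \<le> fanin"
  using fanin_elems elems by (cases elems) auto

abbreviation vals :: "('f, 'a) cnode list \<Rightarrow> bool list \<Rightarrow> 'a list" where
  "vals C b \<equiv> node_values F (\<lambda>i. \<iota> (b ! i)) C"

definition label_holds :: "('f, 'a) cnode list \<Rightarrow> bool list \<Rightarrow> 'a label \<Rightarrow> bool" where
  "label_holds C b l = (case l of LInput i \<Rightarrow> b ! i
     | LClass j v a \<Rightarrow> (vals C b ! v, a) \<in> lcs ar F j
     | LTerm j v w a \<Rightarrow> g j C v w (local_view (\<rho> j) C (vals C b) w) = a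
     | LCount j v a c \<Rightarrow>
         card {w. w < length C \<and> g j C v w (local_view (\<rho> j) C (vals C b) w) = a} mod M j = c
     | LOutput \<Rightarrow> vals C b ! (length C - 1) \<in> S)"

definition label_premises :: "('f, 'a) cnode list \<Rightarrow> 'a label \<Rightarrow> 'a label list" where
  "label_premises C l = (case l of
       LClass j v a \<Rightarrow> (if j = 0 then [] else map (LClass (j - 1) v) elems @
         concat (map (\<lambda>a'. map (LCount (j - 1) v a') [0..<M (j - 1)]) elems))
     | LTerm j v w a \<Rightarrow> (case C ! w of
           Gt f args \<Rightarrow> concat (map (\<lambda>k. map (LClass j k) elems) args)
         | In i \<Rightarrow> [LInput i]
         | Cst _ \<Rightarrow> [])
     | LOutput \<Rightarrow> map (LClass K (length C - 1)) elems
     | _ \<Rightarrow> [])"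

definition label_args :: "('f, 'a) cnode list \<Rightarrow> 'a label \<Rightarrow> 'a label list" where
  "label_args C l = (case l of
       LInput _ \<Rightarrow> []
     | LCount j v a c \<Rightarrow> map (\<lambda>w. LTerm j v w a) [0..<length C]
     | _ \<Rightarrow> label_premises C l)"

definition label_rank :: "'a label \<Rightarrow> nat" where
  "label_rank l = (case l of
       LInput _ \<Rightarrow> 0
     | LClass j _ _ \<Rightarrow> 3 * j + 1
     | LTerm j _ _ _ \<Rightarrow> 3 * j + 2
     | LCount j _ _ _ \<Rightarrow> 3 * j + 3
     | LOutput \<Rightarrow> 3 * K + 2)"

definition labels0 :: "nat \<Rightarrow> ('f, 'a) cnode list \<Rightarrow> 'a label list" where
  "labels0 n C = map LInput [0..<n]
     @ concat (map (\<lambda>j. concat (map (\<lambda>v. map (LClass j v) elems) [0..<length C])) [0..<Suc K])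
     @ concat (map (\<lambda>j. concat (map (\<lambda>v. concat (map (\<lambda>w. map (LTerm j v w) elems)
         [0..<length C])) [0..<length C])) [0..<K])
     @ concat (map (\<lambda>j. concat (map (\<lambda>v. concat (map (\<lambda>a. map (LCount j v a) [0..<M j]) elems))
         [0..<length C])) [0..<K])"

definition labels :: "nat \<Rightarrow> ('f, 'a) cnode list \<Rightarrow> 'a label list" where
  "labels n C = sort_key label_rank (labels0 n C) @ [LOutput]"

definition label_pos :: "nat \<Rightarrow> ('f, 'a) cnode list \<Rightarrow> 'a label \<Rightarrow> nat" where
  "label_pos n C l = (SOME i. i < length (labels n C) \<and> labels n C ! i = l)"

text \<open>The lookup table of a gate is read off from all inputs of length n; this is where the
  family of MOD circuits becomes non-uniform.\<close>

definition lookup_set :: "nat \<Rightarrow> ('f, 'a) cnode list \<Rightarrow> 'a label \<Rightarrow> nat set" where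
  "lookup_set n C l =
     {bin_value (map (label_holds C b') (label_premises C l)) | b'. length b' = n \<and> label_holds C b' l}"

definition label_gate :: "nat \<Rightarrow> ('f, 'a) cnode list \<Rightarrow> 'a label \<Rightarrow> mnode" where
  "label_gate n C l = (case l of
       LInput i \<Rightarrow> MIn i
     | LCount j v a c \<Rightarrow> MGate {s. s mod M j = c} (map (label_pos n C) (label_args C l))
     | _ \<Rightarrow> MGate (lookup_set n C l) (bin_wires (map (label_pos n C) (label_premises C l))))"

definition mod_circuit :: "nat \<Rightarrow> ('f, 'a) cnode list \<Rightarrow> mnode list" where
  "mod_circuit n C = map (label_gate n C) (labels n C)"

lemma in_labels0: "l \<in> set (labels0 n C) \<longleftrightarrow> (case l of
     LInput i \<Rightarrow> i < n
   | LClass j v a \<Rightarrow> j \<le> K \<and> v < length C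
   | LTerm j v w a \<Rightarrow> j < K \<and> v < length C \<and> w < length C
   | LCount j v a c \<Rightarrow> j < K \<and> v < length C \<and> c < M j
   | LOutput \<Rightarrow> False)"
  by (cases l) (auto simp: labels0_def elems image_iff less_Suc_eq_le)

lemma in_labels: "l \<in> set (labels n C) \<longleftrightarrow> l \<in> set (labels0 n C) \<or> l = LOutput"
  by (auto simp: labels_def)

lemma label_rank_labels0: "l \<in> set (labels0 n C) \<Longrightarrow> label_rank l < label_rank LOutput"
  by (cases l) (auto simp: in_labels0 label_rank_def)

lemma sorted_label_rank: "sorted (map label_rank (labels n C))"
  using label_rank_labels0 by (auto simp: labels_def sorted_append sorted_sort_key less_imp_le)

lemma label_pos:
  assumes "l \<in> set (labels n C)"
  shows "label_pos n C l < length (labels n C)" "labels n C ! label_pos n C l = l"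
  using someI_ex[of "\<lambda>i. i < length (labels n C) \<and> labels n C ! i = l"] assms
  unfolding label_pos_def by (auto simp: in_set_conv_nth)

lemma label_pos_less:
  assumes "j < length (labels n C)" "l \<in> set (labels n C)"
    and "label_rank l < label_rank (labels n C ! j)"
  shows "label_pos n C l < j"
proof (rule ccontr)
  assume "\<not> label_pos n C l < j"
  then have "label_rank (labels n C ! j) \<le> label_rank (labels n C ! label_pos n C l)"
    using sorted_nth_mono[OF sorted_label_rank] label_pos(1)[OF assms(2)] by simp
  then show False using label_pos(2)[OF assms(2)] assms(3) by simp
qed

lemma label_args_in_labels:
  assumes wf: "wf_circ ar n C" and l: "l \<in> set (labels n C)" and l': "l' \<in> set (label_args C l)"
  shows "l' \<in> set (labels n C)" "label_rank l' < label_rank l"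
proof -
  have "l' \<in> set (labels n C) \<and> label_rank l' < label_rank l"
  proof (cases l)
    case (LClass j v a)
    then show ?thesis using l l'
      by (cases j) (auto simp: label_args_def label_premises_def in_labels in_labels0 label_rank_def)
  next
    case (LTerm j v w a)
    have jvw: "j < K" "v < length C" "w < length C" using l LTerm by (auto simp: in_labels in_labels0)
    show ?thesis
    proof (cases "C ! w")
      case (In i)
      have "i < n" using wf jvw In unfolding wf_circ_def by force
      then show ?thesis using l' LTerm In jvw
        by (auto simp: label_args_def label_premises_def in_labels in_labels0 label_rank_def)
    next
      case (Gt f args)
      have "\<And>k. k \<in> set args \<Longrightarrow> k < w" using wf jvw Gt unfolding wf_circ_def by force
      then have "\<And>k. k \<in> set args \<Longrightarrow> k < length C" using jvw(3) less_trans by blast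
      then show ?thesis using l' LTerm Gt jvw
        by (auto simp: label_args_def label_premises_def in_labels in_labels0 label_rank_def)
    qed (use l' LTerm in \<open>auto simp: label_args_def label_premises_def\<close>)
  next
    case LOutput
    have "length C > 0" using wf unfolding wf_circ_def by auto
    then show ?thesis using l' LOutput
      by (auto simp: label_args_def label_premises_def in_labels in_labels0 label_rank_def)
  qed (use l l' in \<open>auto simp: label_args_def in_labels in_labels0 label_rank_def\<close>)
  then show "l' \<in> set (labels n C)" "label_rank l' < label_rank l" by auto
qed

lemma length_concat_map_const: "length (concat (map (\<lambda>x. map (h x) ys) xs)) = length xs * length ys"
  by (induction xs) auto

lemma length_label_premises:
  assumes wf: "wf_circ ar n C" and l: "l \<in> set (labels n C)"
  shows "length (label_premises C l) \<le> fanin"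
proof (cases l)
  case (LClass j v a)
  show ?thesis
  proof (cases j)
    case (Suc j')
    have "j' < K" using l LClass Suc by (auto simp: in_labels in_labels0)
    then show ?thesis using LClass Suc fanin_M
      by (simp add: label_premises_def length_concat_map_const)
  qed (simp add: LClass label_premises_def)
next
  case (LTerm j v w a)
  have w: "w < length C" using l LTerm by (auto simp: in_labels in_labels0)
  have "1 \<le> fanin" by (rule one_le_fanin)
  moreover have "length args = ar f" if "C ! w = Gt f args" for f args
    using wf w that unfolding wf_circ_def by force
  ultimately show ?thesis using fanin_ar LTerm
    by (cases "C ! w") (auto simp: label_premises_def length_concat_map_const mult.commute)
qed (use fanin_elems in \<open>simp_all add: label_premises_def\<close>)

lemma class_labels_agree:
  assumes "\<And>r. label_holds C b (LClass j v r) = label_holds C b' (LClass j v r)"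
  shows "(vals C b ! v, vals C b' ! v) \<in> lcs ar F j"
proof -
  have "(vals C b ! v, vals C b ! v) \<in> lcs ar F j" by (rule is_cong_refl[OF lcs_is_cong])
  then have "(vals C b' ! v, vals C b ! v) \<in> lcs ar F j"
    using assms[of "vals C b ! v"] by (simp add: label_holds_def)
  then show ?thesis by (rule is_cong_sym[OF lcs_is_cong])
qed

lemma class_label_determined:
  assumes wf: "wf_circ ar n C" and v: "v < length C"
    and agree: "\<And>l. l \<in> set (label_premises C (LClass (Suc j) v a)) \<Longrightarrow>
      label_holds C b l = label_holds C b' l"
  shows "label_holds C b (LClass (Suc j) v a) = label_holds C b' (LClass (Suc j) v a)"
proof -
  have gw: "gates_wf ar C" using wf by (rule wf_circ_gates_wf)
  have "label_holds C b (LClass j v r) = label_holds C b' (LClass j v r)" for r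
    using agree[of "LClass j v r"] elems by (simp add: label_premises_def)
  then have "(vals C b ! v, vals C b' ! v) \<in> lcs ar F j" by (rule class_labels_agree)
  moreover have "label_holds C b (LCount j v a' c) = label_holds C b' (LCount j v a' c)"
    if "c < M j" for a' c
    using agree[of "LCount j v a' c"] elems that by (simp add: label_premises_def image_iff)
  then have "card {w. w < length C \<and> g j C v w (local_view (\<rho> j) C (vals C b) w) = a'} mod M j =
      card {w. w < length C \<and> g j C v w (local_view (\<rho> j) C (vals C b') w) = a'} mod M j" for a'
    using M_pos by (simp add: label_holds_def)
  ultimately have "(vals C b ! v, vals C b' ! v) \<in> lcs ar F (Suc j)"
    by (rule counts_refine[OF gw node_values_is_valuation[OF gw] node_values_is_valuation[OF gw] v])
  then have "(vals C b ! v, a) \<in> lcs ar F (Suc j) \<longleftrightarrow> (vals C b' ! v, a) \<in> lcs ar F (Suc j)"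
    using is_cong_trans[OF lcs_is_cong] is_cong_sym[OF lcs_is_cong] by metis
  then show ?thesis by (simp add: label_holds_def)
qed

lemma term_label_determined:
  assumes wf: "wf_circ ar n C" and w: "w < length C"
    and agree: "\<And>l. l \<in> set (label_premises C (LTerm j v w a)) \<Longrightarrow>
      label_holds C b l = label_holds C b' l"
  shows "label_holds C b (LTerm j v w a) = label_holds C b' (LTerm j v w a)"
proof -
  have gw: "gates_wf ar C" using wf by (rule wf_circ_gates_wf)
  have "local_view (\<rho> j) C (vals C b) w = local_view (\<rho> j) C (vals C b') w"
  proof (cases "C ! w")
    case (In i)
    have "b ! i = b' ! i" using agree[of "LInput i"] In by (simp add: label_premises_def label_holds_def)
    then show ?thesis using In nth_node_values[OF gw w] by (simp add: local_view_def)
  next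
    case (Cst c)
    then show ?thesis using nth_node_values[OF gw w] by (simp add: local_view_def)
  next
    case (Gt f args)
    have "(vals C b ! k, vals C b' ! k) \<in> lcs ar F j" if "k \<in> set args" for k
      using agree Gt elems that by (intro class_labels_agree) (auto simp: label_premises_def)
    then show ?thesis using Gt \<rho>_eq by (simp add: local_view_def)
  qed
  then show ?thesis by (simp add: label_holds_def)
qed

lemma output_label_determined:
  assumes agree: "\<And>l. l \<in> set (label_premises C LOutput) \<Longrightarrow> label_holds C b l = label_holds C b' l"
  shows "label_holds C b LOutput = label_holds C b' LOutput"
proof -
  have "(vals C b ! (length C - 1), vals C b' ! (length C - 1)) \<in> lcs ar F K"
    using agree elems by (intro class_labels_agree) (simp add: label_premises_def)
  then show ?thesis by (simp add: label_holds_def lcs_K)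
qed

abbreviation is_lookup :: "'a label \<Rightarrow> bool" where
  "is_lookup l \<equiv> (\<forall>i. l \<noteq> LInput i) \<and> (\<forall>j v a c. l \<noteq> LCount j v a c)"

lemma lookup_label_determined:
  assumes wf: "wf_circ ar n C" and l: "l \<in> set (labels n C)" "is_lookup l"
    and agree: "map (label_holds C b) (label_premises C l) = map (label_holds C b') (label_premises C l)"
  shows "label_holds C b l = label_holds C b' l"
proof -
  have agree': "\<And>l'. l' \<in> set (label_premises C l) \<Longrightarrow> label_holds C b l' = label_holds C b' l'"
    using agree by (simp add: map_eq_conv)
  show ?thesis
  proof (cases l)
    case (LClass j v a)
    have v: "v < length C" using l(1) LClass by (simp add: in_labels in_labels0)
    show ?thesis
    proof (cases j)
      case (Suc j')
      then show ?thesis using class_label_determined[OF wf v, of j' a b b'] agree' LClass by simp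
    qed (simp add: LClass label_holds_def)
  next
    case (LTerm j v w a)
    have w: "w < length C" using l(1) LTerm by (simp add: in_labels in_labels0)
    then show ?thesis using term_label_determined[OF wf w, of j v a b b'] agree' LTerm by simp
  next
    case LOutput
    then show ?thesis using output_label_determined[of C b b'] agree' by simp
  qed (use l(2) in auto)
qed

lemma label_gate_lookup:
  "is_lookup l \<Longrightarrow>
    label_gate n C l = MGate (lookup_set n C l) (bin_wires (map (label_pos n C) (label_premises C l)))"
  by (cases l) (auto simp: label_gate_def)

lemma label_gate_args: "label_gate n C l = MGate T ps \<Longrightarrow> set ps = label_pos n C ` set (label_args C l)"
  by (cases l) (auto simp: label_gate_def label_args_def set_bin_wires)

lemma label_gate_rank: "label_gate n C l = MGate T ps \<Longrightarrow> 0 < label_rank l"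
  by (cases l) (auto simp: label_gate_def label_rank_def)

lemma label_gate_input: "label_gate n C l = MIn i \<Longrightarrow> l = LInput i"
  by (cases l) (auto simp: label_gate_def)

lemma lookup_gate_correct:
  assumes wf: "wf_circ ar n C" and l: "l \<in> set (labels n C)" "is_lookup l" and b: "length b = n"
  shows "label_holds C b l \<longleftrightarrow> sum_list (map (\<lambda>p. if label_holds C b (labels n C ! p) then 1 else 0)
    (bin_wires (map (label_pos n C) (label_premises C l)))) mod m \<in> lookup_set n C l"
proof -
  let ?bits = "\<lambda>b'. bin_value (map (label_holds C b') (label_premises C l))"
  have "label_premises C l = label_args C l" using l(2) by (cases l) (auto simp: label_args_def)
  then have eq: "map (\<lambda>l'. label_holds C b (labels n C ! label_pos n C l')) (label_premises C l) =
      map (label_holds C b) (label_premises C l)"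
    using label_pos(2)[OF label_args_in_labels(1)[OF wf l(1)]] by simp
  have "sum_list (map (\<lambda>p. if label_holds C b (labels n C ! p) then 1 else 0)
      (bin_wires (map (label_pos n C) (label_premises C l)))) = ?bits b"
    by (simp add: sum_bin_wires o_def eq)
  moreover have "?bits b < m"
  proof -
    have "?bits b < 2 ^ length (label_premises C l)"
      using bin_value_less[of "map (label_holds C b) (label_premises C l)"] by simp
    also have "\<dots> \<le> 2 ^ fanin" by (rule power_increasing[OF length_label_premises[OF wf l(1)]]) simp
    finally show ?thesis using fanin_m by simp
  qed
  moreover have "?bits b \<in> lookup_set n C l \<longleftrightarrow> label_holds C b l"
  proof
    assume "?bits b \<in> lookup_set n C l"
    then obtain b' where "length b' = n" "label_holds C b' l" "?bits b' = ?bits b"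
      unfolding lookup_set_def by auto
    then show "label_holds C b l"
      using lookup_label_determined[OF wf l] bin_value_inj by (metis length_map)
  qed (use b in \<open>auto simp: lookup_set_def\<close>)
  ultimately show ?thesis by simp
qed

lemma count_gate_correct:
  assumes wf: "wf_circ ar n C" and l: "LCount j v a c \<in> set (labels n C)"
  shows "label_holds C b (LCount j v a c) \<longleftrightarrow>
    sum_list (map (\<lambda>p. if label_holds C b (labels n C ! p) then 1 else 0)
      (map (label_pos n C) (label_args C (LCount j v a c)))) mod m \<in> {s. s mod M j = c}"
proof -
  have "j < K" using l by (simp add: in_labels in_labels0)
  have "map (\<lambda>p. if label_holds C b (labels n C ! p) then 1 else 0)
      (map (label_pos n C) (label_args C (LCount j v a c))) =
      map (\<lambda>w. if label_holds C b (LTerm j v w a) then 1 else (0::nat)) [0..<length C]"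
    using label_pos(2)[OF label_args_in_labels(1)[OF wf l]] by (simp add: label_args_def)
  then show ?thesis
    using mod_mod_cancel[OF M_dvd[OF \<open>j < K\<close>]]
    by (simp add: sum_list_indicator_upt label_holds_def)
qed

lemma label_gate_correct:
  assumes wf: "wf_circ ar n C" and l: "l \<in> set (labels n C)" and b: "length b = n"
  shows "case label_gate n C l of
      MIn i \<Rightarrow> label_holds C b l = b ! i
    | MGate T ps \<Rightarrow>
        label_holds C b l \<longleftrightarrow> sum_list (map (\<lambda>p. if label_holds C b (labels n C ! p) then 1 else 0) ps) mod m \<in> T"
proof (cases "is_lookup l")
  case True
  then show ?thesis using lookup_gate_correct[OF assms(1,2) True b] by (simp add: label_gate_lookup)
next
  case False
  then show ?thesis
    using count_gate_correct[OF wf] l by (auto simp: label_gate_def label_holds_def)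
qed

lemma mod_circuit_gate_args:
  assumes wf: "wf_circ ar n C" and j: "j < length (labels n C)"
    and gate: "label_gate n C (labels n C ! j) = MGate T ps"
  shows "\<forall>k\<in>set ps. k < j \<and> label_rank (labels n C ! k) < label_rank (labels n C ! j)"
proof
  fix k assume "k \<in> set ps"
  then obtain l where l: "l \<in> set (label_args C (labels n C ! j))" and k: "k = label_pos n C l"
    using label_gate_args[OF gate] by blast
  have lj: "labels n C ! j \<in> set (labels n C)" using j by simp
  show "k < j \<and> label_rank (labels n C ! k) < label_rank (labels n C ! j)"
    using label_args_in_labels[OF wf lj l] label_pos_less[OF j] label_pos(2) k by simp
qed

lemma nth_mod_values_mod_circuit:
  assumes wf: "wf_circ ar n C" and b: "length b = n" and j: "j < length (labels n C)"
  shows "mod_values m b (mod_circuit n C) ! j = label_holds C b (labels n C ! j)"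
proof (rule nth_mod_values_eqI[where P="\<lambda>j. label_holds C b (labels n C ! j)"])
  fix j assume "j < length (mod_circuit n C)"
  then have j: "j < length (labels n C)" by (simp add: mod_circuit_def)
  then have "labels n C ! j \<in> set (labels n C)" by simp
  from label_gate_correct[OF wf this b] mod_circuit_gate_args[OF wf j]
  show "case mod_circuit n C ! j of
      MIn i \<Rightarrow> label_holds C b (labels n C ! j) = b ! i
    | MGate T args \<Rightarrow> (\<forall>k\<in>set args. k < j) \<and> (label_holds C b (labels n C ! j) \<longleftrightarrow>
        sum_list (map (\<lambda>k. if label_holds C b (labels n C ! k) then 1 else 0) args) mod m \<in> T)"
    using j by (auto simp: mod_circuit_def split: mnode.split)
qed (use j in \<open>simp add: mod_circuit_def\<close>)

lemma meval_mod_circuit: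
  assumes wf: "wf_circ ar n C" and b: "length b = n"
  shows "meval m b (mod_circuit n C) \<longleftrightarrow> circ_eval F (\<lambda>i. \<iota> (b ! i)) C \<in> S"
proof -
  have "mod_circuit n C \<noteq> []" "C \<noteq> []" "labels n C ! (length (labels n C) - 1) = LOutput"
    using wf by (simp_all add: mod_circuit_def labels_def wf_circ_def nth_append)
  then show ?thesis
    using nth_mod_values_mod_circuit[OF wf b, of "length (labels n C) - 1"]
    by (simp add: meval_eq_nth circ_eval_node_values mod_circuit_def labels_def label_holds_def)
qed

lemma wf_mcirc_mod_circuit:
  assumes wf: "wf_circ ar n C"
  shows "wf_mcirc n (mod_circuit n C)"
  unfolding wf_mcirc_def
proof (intro conjI allI impI)
  show "mod_circuit n C \<noteq> []" by (simp add: mod_circuit_def labels_def)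
  fix j assume "j < length (mod_circuit n C)"
  then have j: "j < length (labels n C)" by (simp add: mod_circuit_def)
  show "case mod_circuit n C ! j of MIn i \<Rightarrow> i < n | MGate T args \<Rightarrow> \<forall>k\<in>set args. k < j"
  proof (cases "mod_circuit n C ! j")
    case (MIn i)
    then have "labels n C ! i' = LInput i" if "i' = j" for i'
      using j that label_gate_input by (simp add: mod_circuit_def)
    then have "LInput i \<in> set (labels n C)" using j by (metis nth_mem)
    then show ?thesis using MIn by (simp add: in_labels in_labels0)
  qed (use mod_circuit_gate_args[OF wf j] j in \<open>simp add: mod_circuit_def\<close>)
qed

lemma mdepth_mod_circuit:
  assumes wf: "wf_circ ar n C"
  shows "mdepth (mod_circuit n C) \<le> 3 * K + 2"
proof -
  have "depth_values (mod_circuit n C) ! j \<le> label_rank (labels n C ! j)"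
    if "j < length (labels n C)" for j
  proof (rule nth_depth_values_le[where r="\<lambda>j. label_rank (labels n C ! j)"])
    fix j assume "j < length (mod_circuit n C)"
    then have j: "j < length (labels n C)" by (simp add: mod_circuit_def)
    then show "case mod_circuit n C ! j of MIn i \<Rightarrow> True
      | MGate T args \<Rightarrow> 0 < label_rank (labels n C ! j) \<and>
          (\<forall>k\<in>set args. k < j \<and> label_rank (labels n C ! k) < label_rank (labels n C ! j))"
      using mod_circuit_gate_args[OF wf j] label_gate_rank
      by (auto simp: mod_circuit_def split: mnode.split)
  qed (use that in \<open>simp add: mod_circuit_def\<close>)
  from this[of "length (labels n C) - 1"]
  have "depth_values (mod_circuit n C) ! (length (mod_circuit n C) - 1) \<le> label_rank LOutput"
    by (simp add: labels_def nth_append mod_circuit_def)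
  then show ?thesis
    by (simp add: mdepth_eq_nth mod_circuit_def labels_def label_rank_def)
qed

lemma M_le_m: "j < K \<Longrightarrow> M j \<le> m"
proof -
  have "0 < m" using fanin_m by (metis le0 less_le_trans zero_less_power zero_less_numeral)
  then show "j < K \<Longrightarrow> M j \<le> m" using M_dvd[of j] by (intro dvd_imp_le) auto
qed

lemma length_labels0:
  "length (labels0 n C) \<le> n + 3 * ((K+1) * ((length C + 1) * ((length C + 1) *
    ((length elems + 1) * (m + 1)))))"
proof -
  let ?N = "length C" and ?p = "length elems"
  have "length (concat (map (\<lambda>j. concat (map (\<lambda>v. concat (map (\<lambda>a. map (LCount j v a) [0..<M j])
      elems)) [0..<?N])) [0..<K])) \<le> K * (?N * (?p * m))"
    by (intro length_concat_map_le) (auto simp: M_le_m)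
  moreover have "length (concat (map (\<lambda>j. concat (map (\<lambda>v. concat (map (\<lambda>w. map (LTerm j v w)
      elems) [0..<?N])) [0..<?N])) [0..<K])) \<le> K * (?N * (?N * ?p))"
    by (intro length_concat_map_le) auto
  moreover have "length (concat (map (\<lambda>j. concat (map (\<lambda>v. map (LClass j v) elems) [0..<?N]))
      [0..<Suc K])) \<le> Suc K * (?N * ?p)"
    by (intro length_concat_map_le) auto
  ultimately have "length (labels0 n C) \<le> n + (Suc K * (?N * ?p) + K * (?N * (?N * ?p)) +
      K * (?N * (?p * m)))"
    unfolding labels0_def by simp
  then show ?thesis using three_products_le[of K ?N ?p m] by linarith
qed

lemma msize_mod_circuit:
  assumes wf: "wf_circ ar n C"
  shows "msize (mod_circuit n C) \<le> (n + 3 * ((K+1) * ((length C + 1) * ((length C + 1) *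
    ((length elems + 1) * (m + 1))))) + 1) * (1 + m + length C)"
proof -
  have fan: "mfanin (label_gate n C l) \<le> m + length C" if l: "l \<in> set (labels n C)" for l
  proof (cases "is_lookup l")
    case True
    have "length (bin_wires (map (label_pos n C) (label_premises C l))) + 1 =
        2 ^ length (label_premises C l)"
      using length_bin_wires[of "map (label_pos n C) (label_premises C l)"] by simp
    also have "\<dots> \<le> 2 ^ fanin" using length_label_premises[OF wf l] by simp
    finally show ?thesis using fanin_m label_gate_lookup[OF True] by simp
  qed (auto simp: label_gate_def label_args_def)
  have "sum_list (map mfanin (mod_circuit n C)) \<le> length (labels n C) * (m + length C)"
    using sum_list_bounded_by_length[of "labels n C"] fan
    by (simp add: mod_circuit_def comp_def)
  then have "msize (mod_circuit n C) \<le> length (labels n C) * (1 + m + length C)"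
    unfolding msize_def by (simp add: mod_circuit_def algebra_simps)
  also have "\<dots> \<le> (n + 3 * ((K+1) * ((length C + 1) * ((length C + 1) * ((length elems + 1) *
      (m + 1))))) + 1) * (1 + m + length C)"
    by (rule mult_le_mono1) (use length_labels0[of n C] in \<open>simp add: labels_def\<close>)
  finally show ?thesis .
qed

lemma language_in_CC0:
  assumes wf: "\<And>n. 1 \<le> n \<Longrightarrow> wf_circ ar n (t n)"
    and size: "\<And>n. 1 \<le> n \<Longrightarrow> circ_size (t n) \<le> c * n ^ k"
  shows "{b. 1 \<le> length b \<and> circ_eval F (\<lambda>i. \<iota> (b ! i)) (t (length b)) \<in> S} \<in> CC0"
proof -
  define D where "D n = (if n = 0 then [MGate {} []] else mod_circuit n (t n))" for n
  define cc where "cc = (1 + 3 * ((K+1) * ((length elems + 1) * (m + 1)))) * (m + 1) * (c + 2) ^ 3"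
  have cc: "1 \<le> cc" by (simp add: cc_def)
  have "2 \<le> m" using fanin_m power_increasing[OF one_le_fanin, of "2::nat"] by simp
  moreover have "wf_mcirc n (D n) \<and> mdepth (D n) \<le> 3 * K + 2 \<and> msize (D n) \<le> cc * n ^ (3 * (k + 1)) + cc"
    for n
  proof (cases "n = 0")
    case True
    then show ?thesis using cc by (simp add: D_def wf_mcirc_def mdepth_def dstep_def msize_def)
  next
    case False
    then have n: "1 \<le> n" by simp
    have N: "length (t n) \<le> c * n ^ k" using size[OF n] by (simp add: circ_size_def)
    have "msize (D n) = msize (mod_circuit n (t n))" using False by (simp add: D_def)
    also have "\<dots> \<le> (n + 3 * ((K+1) * ((length (t n) + 1) * ((length (t n) + 1) *
        ((length elems + 1) * (m + 1))))) + 1) * (1 + m + length (t n))"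
      by (rule msize_mod_circuit[OF wf[OF n]])
    also have "\<dots> \<le> cc * n ^ (3 * (k + 1))"
      unfolding cc_def by (rule translation_size_poly[OF n N])
    finally have "msize (D n) \<le> cc * n ^ (3 * (k + 1))" .
    then show ?thesis
      using False wf_mcirc_mod_circuit[OF wf[OF n]] mdepth_mod_circuit[OF wf[OF n]] by (simp add: D_def)
  qed
  moreover have "1 \<le> length b \<and> circ_eval F (\<lambda>i. \<iota> (b ! i)) (t (length b)) \<in> S \<longleftrightarrow>
      meval m b (D (length b))" for b
    using meval_mod_circuit[OF wf refl, of b]
    by (cases "length b = 0") (simp_all add: D_def meval_def mstep_def Suc_le_eq)
  ultimately show ?thesis unfolding CC0_def by blast
qed

end

lemma (in counting_levels) mod_translation_exists:
  assumes "finite (range ar)"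
  obtains m elems fanin where "mod_translation ar F K \<rho> M g m elems fanin"
proof -
  obtain elems :: "'a list" where elems: "set elems = UNIV" using finite_list[OF finite_UNIV] by blast
  define p where "p = length elems"
  define Mall where "Mall = (\<Prod>j<K. M j)"
  have Mall_pos: "0 < Mall" unfolding Mall_def using M_pos by (simp add: prod_pos)
  have M_dvd: "j < K \<Longrightarrow> M j dvd Mall" for j unfolding Mall_def by (rule dvd_prodI) auto
  define fanin where "fanin = p * Max (range ar) + p + p * Mall"
  have "mod_translation ar F K \<rho> M g (2 ^ fanin * Mall) elems fanin"
  proof
    show "set elems = UNIV" by (rule elems)
    show "j < K \<Longrightarrow> M j dvd 2 ^ fanin * Mall" for j using M_dvd by simp
    show "2 ^ fanin \<le> 2 ^ fanin * Mall" using Mall_pos by simp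
    show "length elems * ar f \<le> fanin" for f
    proof -
      have "p * ar f \<le> p * Max (range ar)" by (rule mult_le_mono2) (simp add: Max_ge[OF assms])
      then show ?thesis unfolding fanin_def p_def[symmetric] by linarith
    qed
    show "length elems + length elems * M j \<le> fanin" if "j < K" for j
    proof -
      have "p * M j \<le> p * Mall" by (rule mult_le_mono2) (rule dvd_imp_le[OF M_dvd[OF that] Mall_pos])
      then show ?thesis unfolding fanin_def p_def[symmetric] by linarith
    qed
    show "length elems \<le> fanin" unfolding fanin_def p_def by simp
  qed
  then show ?thesis by (rule that)
qed

lemma (in counting_levels) nuP_subset_CC0:
  assumes "finite (range ar)"
  shows "nuP ar F \<subseteq> CC0"
proof
  fix L assume "L \<in> nuP ar F"
  then obtain t \<iota> S c k where wf: "\<And>n. 1 \<le> n \<Longrightarrow> wf_circ ar n (t n)"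
    and size: "\<And>n. 1 \<le> n \<Longrightarrow> circ_size (t n) \<le> c * n ^ k"
    and L: "L = {b. 1 \<le> length b \<and> circ_eval F (\<lambda>i. \<iota> (b ! i)) (t (length b)) \<in> S}"
    unfolding nuP_def by blast
  obtain m elems fanin where "mod_translation ar F K \<rho> M g m elems fanin"
    using mod_translation_exists[OF assms] .
  then show "L \<in> CC0" unfolding L by (rule mod_translation.language_in_CC0[OF _ wf size])
qed

theorem mainTheorem13:
  fixes ar :: "'f::finite \<Rightarrow> nat" and F :: "'f \<Rightarrow> 'a::finite list \<Rightarrow> 'a"
  assumes "has_malcev ar F" and "nilpotent ar F"
  shows "nuP ar F \<subseteq> CC0"
proof -
  obtain K \<rho> M g where "lcs ar F K = Id"
    and "\<And>j. refines_by_counts ar F (lcs ar F j) (lcs ar F (Suc j)) (\<rho> j) (M j) (g j)"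
    using nilpotent_refines_by_counts[OF assms] by blast
  then interpret counting_levels ar F K \<rho> M g by unfold_locales
  show ?thesis by (rule nuP_subset_CC0) simp
qed

end
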